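(* Let $(\mathcal R,\mu)$ be a finite (nonatomic, separable) measure space, $\Omega\subset\mathcal R$ a $\mu$-measurable set with $\lambda:=\mu(\Omega)>0$, and $X$ a rearrangement-invariant space over $(\mathcal R,\mu)$ generated by an r.-i. function norm $\rho$. Then the subspace $P_\Omega X$, $P_\Omega=\chi_\Omega I$, is a rearrangement-invariant space over $(\Omega,\mu)$ generated by the same function norm $\rho$ restricted to functions supported in $\Omega$, and $X$ and $P_\Omega X$ have the same Boyd indices and the same Zippin indices.
   Context: For an r.-i. space $Y$ over a finite measure space $(S,\mu)$: with its Luxemburg representation $\overline Y$ over $[0,\mu(S)]$ and $(E_xf)(t)=f(xt)$ if $xt\in[0,\mu(S)]$, $0$ otherwise, let $h_Y(x)=\|E_{1/x}\|_{\mathcal B(\overline Y)}$; Boyd indices $\alpha_Y=\lim_{x\to0}\log h_Y(x)/\log x$, $\beta_Y=\lim_{x\to\infty}\log h_Y(x)/\log x$. Fundamental function $\varphi_Y(t)=\|\chi_E\|_Y$ with $\mu(E)=t$, $M_Y(x)=\limsup_{t\to0}\varphi_Y(xt)/\varphi_Y(t)$; Zippin indices $p_Y=\lim_{x\to0}\log M_Y(x)/\log x$, $q_Y=\lim_{x\to\infty}\log M_Y(x)/\log x$. *)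

theory Defs
  imports "HOL-Analysis.Analysis" "HOL-Library.Liminf_Limsup"
begin

definition nonatomic_measure :: "'a measure \<Rightarrow> bool" where
  "nonatomic_measure M \<longleftrightarrow>
     (\<forall>A\<in>sets M. 0 < emeasure M A \<longrightarrow>
        (\<exists>B\<in>sets M. B \<subseteq> A \<and> 0 < emeasure M B \<and> emeasure M B < emeasure M A))"

definition separable_measure :: "'a measure \<Rightarrow> bool" where
  "separable_measure M \<longleftrightarrow>
     (\<exists>D. countable D \<and> D \<subseteq> sets M \<and>
        (\<forall>A\<in>sets M. \<forall>e>0. \<exists>B\<in>D. emeasure M ((A - B) \<union> (B - A)) < ennreal e))"

text \<open>A function norm is a map on nonnegative measurable functions (values in [0,inf]).
  A real function f has norm rho(|f|); the space is {f measurable. rho(|f|) < inf}.\<close>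

definition function_norm :: "'a measure \<Rightarrow> (('a \<Rightarrow> ennreal) \<Rightarrow> ennreal) \<Rightarrow> bool" where
  "function_norm M \<rho> \<longleftrightarrow>
     (\<forall>f\<in>borel_measurable M. \<rho> f = 0 \<longleftrightarrow> (AE x in M. f x = 0)) \<and>
     (\<forall>f\<in>borel_measurable M. \<forall>a::real. a \<ge> 0 \<longrightarrow> \<rho> (\<lambda>x. ennreal a * f x) = ennreal a * \<rho> f) \<and>
     (\<forall>f\<in>borel_measurable M. \<forall>g\<in>borel_measurable M. \<rho> (\<lambda>x. f x + g x) \<le> \<rho> f + \<rho> g) \<and>
     (\<forall>f\<in>borel_measurable M. \<forall>g\<in>borel_measurable M.
        (AE x in M. g x \<le> f x) \<longrightarrow> \<rho> g \<le> \<rho> f) \<and>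
     (\<forall>F f. (\<forall>n. F n \<in> borel_measurable M) \<and> f \<in> borel_measurable M \<and>
        (AE x in M. incseq (\<lambda>n. F n x) \<and> f x = (SUP n. F n x))
        \<longrightarrow> \<rho> f = (SUP n. \<rho> (F n))) \<and>
     (\<forall>E\<in>sets M. emeasure M E < \<infinity> \<longrightarrow> \<rho> (indicator E) < \<infinity>) \<and>
     (\<forall>E\<in>sets M. emeasure M E < \<infinity> \<longrightarrow>
        (\<exists>C::real. \<forall>f\<in>borel_measurable M. (\<integral>\<^sup>+x\<in>E. f x \<partial>M) \<le> ennreal C * \<rho> f))"

definition equimeasurable :: "'a measure \<Rightarrow> ('a \<Rightarrow> ennreal) \<Rightarrow> ('a \<Rightarrow> ennreal) \<Rightarrow> bool" where
  "equimeasurable M f g \<longleftrightarrow>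
     (\<forall>s. emeasure M {x\<in>space M. s < f x} = emeasure M {x\<in>space M. s < g x})"

definition ri_function_norm :: "'a measure \<Rightarrow> (('a \<Rightarrow> ennreal) \<Rightarrow> ennreal) \<Rightarrow> bool" where
  "ri_function_norm M \<rho> \<longleftrightarrow> function_norm M \<rho> \<and>
     (\<forall>f\<in>borel_measurable M. \<forall>g\<in>borel_measurable M. equimeasurable M f g \<longrightarrow> \<rho> f = \<rho> g)"

definition restrict_norm :: "'a set \<Rightarrow> (('a \<Rightarrow> ennreal) \<Rightarrow> ennreal) \<Rightarrow> ('a \<Rightarrow> ennreal) \<Rightarrow> ennreal" where
  "restrict_norm \<Omega> \<rho> g = \<rho> (\<lambda>x. indicator \<Omega> x * g x)"

definition decr_rearr :: "'a measure \<Rightarrow> ('a \<Rightarrow> ennreal) \<Rightarrow> real \<Rightarrow> ennreal" where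
  "decr_rearr M f t = Inf {s. emeasure M {x\<in>space M. s < f x} \<le> ennreal t}"

definition rep_space :: "'a measure \<Rightarrow> real measure" where
  "rep_space M = restrict_space lborel {0 .. measure M (space M)}"

definition is_luxemburg_rep ::
  "'a measure \<Rightarrow> (('a \<Rightarrow> ennreal) \<Rightarrow> ennreal) \<Rightarrow> ((real \<Rightarrow> ennreal) \<Rightarrow> ennreal) \<Rightarrow> bool" where
  "is_luxemburg_rep M \<rho> \<rho>b \<longleftrightarrow> ri_function_norm (rep_space M) \<rho>b \<and>
     (\<forall>f\<in>borel_measurable M. \<rho> f = \<rho>b (decr_rearr M f))"

definition luxemburg_norm :: "'a measure \<Rightarrow> (('a \<Rightarrow> ennreal) \<Rightarrow> ennreal) \<Rightarrow> (real \<Rightarrow> ennreal) \<Rightarrow> ennreal" where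
  "luxemburg_norm M \<rho> = (SOME \<rho>b. is_luxemburg_rep M \<rho> \<rho>b)"

definition dilation :: "real \<Rightarrow> real \<Rightarrow> (real \<Rightarrow> ennreal) \<Rightarrow> real \<Rightarrow> ennreal" where
  "dilation L s g t = (if 0 \<le> s * t \<and> s * t \<le> L then g (s * t) else 0)"

text \<open>h_Y(x) = operator norm of E_{1/x} on the Luxemburg representation space.
  Since |E f| = E |f|, the sup may be taken over nonnegative functions.\<close>
definition boyd_h :: "'a measure \<Rightarrow> (('a \<Rightarrow> ennreal) \<Rightarrow> ennreal) \<Rightarrow> real \<Rightarrow> ennreal" where
  "boyd_h M \<rho> x =
     (SUP g\<in>{g\<in>borel_measurable (rep_space M). luxemburg_norm M \<rho> g \<le> 1}.
        luxemburg_norm M \<rho> (dilation (measure M (space M)) (1 / x) g))"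

definition boyd_lower :: "'a measure \<Rightarrow> (('a \<Rightarrow> ennreal) \<Rightarrow> ennreal) \<Rightarrow> real" where
  "boyd_lower M \<rho> = Lim (at_right 0) (\<lambda>x. ln (enn2real (boyd_h M \<rho> x)) / ln x)"

definition boyd_upper :: "'a measure \<Rightarrow> (('a \<Rightarrow> ennreal) \<Rightarrow> ennreal) \<Rightarrow> real" where
  "boyd_upper M \<rho> = Lim at_top (\<lambda>x. ln (enn2real (boyd_h M \<rho> x)) / ln x)"

text \<open>phi_Y(t) = rho(chi_E) with mu(E) = t (well defined by rearrangement invariance).\<close>
definition fundamental_fn :: "'a measure \<Rightarrow> (('a \<Rightarrow> ennreal) \<Rightarrow> ennreal) \<Rightarrow> real \<Rightarrow> real" where
  "fundamental_fn M \<rho> t =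
     (SOME v. \<exists>E\<in>sets M. emeasure M E = ennreal t \<and> enn2real (\<rho> (indicator E)) = v)"

definition zippin_M :: "'a measure \<Rightarrow> (('a \<Rightarrow> ennreal) \<Rightarrow> ennreal) \<Rightarrow> real \<Rightarrow> ereal" where
  "zippin_M M \<rho> x =
     Limsup (at_right 0) (\<lambda>t. ereal (fundamental_fn M \<rho> (x * t) / fundamental_fn M \<rho> t))"

definition zippin_lower :: "'a measure \<Rightarrow> (('a \<Rightarrow> ennreal) \<Rightarrow> ennreal) \<Rightarrow> real" where
  "zippin_lower M \<rho> = Lim (at_right 0) (\<lambda>x. ln (real_of_ereal (zippin_M M \<rho> x)) / ln x)"

definition zippin_upper :: "'a measure \<Rightarrow> (('a \<Rightarrow> ennreal) \<Rightarrow> ennreal) \<Rightarrow> real" where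
  "zippin_upper M \<rho> = Lim at_top (\<lambda>x. ln (real_of_ereal (zippin_M M \<rho> x)) / ln x)"

end

theory Submission
  imports Defs "HOL-Probability.Distribution_Functions" "HOL-Real_Asymp.Real_Asymp"
begin

text \<open>
  Restriction to \<open>\<Omega>\<close> and the Luxemburg representation are both pullbacks: if \<open>\<phi>\<close> maps
  \<open>A \<subseteq> S\<close> measure-preservingly onto \<open>N\<close>, then \<open>g \<mapsto> \<rho>(\<chi>\<^sub>A \<cdot> g \<circ> \<phi>)\<close> is an r.-i. function norm
  on \<open>N\<close>, because \<open>\<chi>\<^sub>A \<cdot> g \<circ> \<phi>\<close> has the distribution of \<open>g\<close>.
  A nonatomic finite measure space carries such a map \<open>\<tau>\<close> onto \<open>[0, \<mu>(S)]\<close>, read off from a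
  dyadic chain of sets whose midpoints come from Sierpinski's theorem. It identifies the
  Luxemburg representation as \<open>g \<mapsto> \<rho>(g \<circ> \<tau>)\<close>, and the representation of the restricted norm as
  that of \<open>\<rho>\<close> applied to extensions by zero from \<open>[0, \<mu>(\<Omega>)]\<close>.
  Hence the fundamental functions agree on \<open>[0, \<mu>(\<Omega>)]\<close>, which is all the Zippin indices see,
  and \<open>h\<^sub>\<Omega>(x) \<le> h(x) \<le> (\<lfloor>\<mu>(S)/\<mu>(\<Omega>)\<rfloor> + 1) h\<^sub>\<Omega>(x)\<close>: a dilated function on \<open>[0, \<mu>(S)]\<close>
  splits into that many translates of dilated functions on \<open>[0, \<mu>(\<Omega>)]\<close>. A bounded factor
  disappears in \<open>log h(x) / log x\<close>, so the Boyd indices agree too.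
\<close>

section \<open>Function norms and their pullbacks\<close>

lemma function_normD_zero_iff:
  "function_norm M \<rho> \<Longrightarrow> f \<in> borel_measurable M \<Longrightarrow> \<rho> f = 0 \<longleftrightarrow> (AE x in M. f x = 0)"
  unfolding function_norm_def by blast

lemma function_normD_homogeneous:
  "function_norm M \<rho> \<Longrightarrow> f \<in> borel_measurable M \<Longrightarrow> 0 \<le> a \<Longrightarrow>
    \<rho> (\<lambda>x. ennreal a * f x) = ennreal a * \<rho> f"
  unfolding function_norm_def by blast

lemma function_normD_triangle:
  "function_norm M \<rho> \<Longrightarrow> f \<in> borel_measurable M \<Longrightarrow> g \<in> borel_measurable M \<Longrightarrow>
    \<rho> (\<lambda>x. f x + g x) \<le> \<rho> f + \<rho> g"
  unfolding function_norm_def by blast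

lemma function_normD_mono:
  "function_norm M \<rho> \<Longrightarrow> f \<in> borel_measurable M \<Longrightarrow> g \<in> borel_measurable M \<Longrightarrow>
    (AE x in M. g x \<le> f x) \<Longrightarrow> \<rho> g \<le> \<rho> f"
  unfolding function_norm_def by blast

lemma function_normD_Fatou:
  "function_norm M \<rho> \<Longrightarrow> (\<And>n. F n \<in> borel_measurable M) \<Longrightarrow> f \<in> borel_measurable M \<Longrightarrow>
    (AE x in M. incseq (\<lambda>n. F n x) \<and> f x = (SUP n. F n x)) \<Longrightarrow> \<rho> f = (SUP n. \<rho> (F n))"
  unfolding function_norm_def by blast

lemma function_normD_indicator_finite:
  "function_norm M \<rho> \<Longrightarrow> E \<in> sets M \<Longrightarrow> emeasure M E < \<infinity> \<Longrightarrow> \<rho> (indicator E) < \<infinity>"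
  unfolding function_norm_def by blast

lemma function_normD_set_nn_integral:
  "function_norm M \<rho> \<Longrightarrow> E \<in> sets M \<Longrightarrow> emeasure M E < \<infinity> \<Longrightarrow>
    \<exists>C::real. \<forall>f\<in>borel_measurable M. (\<integral>\<^sup>+x\<in>E. f x \<partial>M) \<le> ennreal C * \<rho> f"
  unfolding function_norm_def by blast

lemma ri_function_normD_function_norm: "ri_function_norm M \<rho> \<Longrightarrow> function_norm M \<rho>"
  unfolding ri_function_norm_def by blast

lemma ri_function_normD_equimeasurable:
  "ri_function_norm M \<rho> \<Longrightarrow> f \<in> borel_measurable M \<Longrightarrow> g \<in> borel_measurable M \<Longrightarrow>
    equimeasurable M f g \<Longrightarrow> \<rho> f = \<rho> g"
  unfolding ri_function_norm_def by blast

lemma restrict_space_space: "restrict_space M (space M) = M"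
proof (rule measure_eqI)
  show "sets (restrict_space M (space M)) = sets M"
    using sets.sets_into_space by (fastforce simp: sets_restrict_space)
next
  fix A assume "A \<in> sets (restrict_space M (space M))"
  then show "emeasure (restrict_space M (space M)) A = emeasure M A"
    using sets.sets_into_space by (subst emeasure_restrict_space) (auto simp: sets_restrict_space)
qed

lemma sets_superlevel:
  fixes f :: "'a \<Rightarrow> ennreal"
  assumes "f \<in> borel_measurable M"
  shows "{x\<in>space M. s < f x} \<in> sets M"
proof -
  have "f -` {s<..} \<inter> space M \<in> sets M"
    by (rule measurable_sets[OF assms]) (intro borel_open open_greaterThan)
  moreover have "f -` {s<..} \<inter> space M = {x\<in>space M. s < f x}" by auto
  ultimately show ?thesis by simp
qed

definition pullback_norm ::
  "'a set \<Rightarrow> ('a \<Rightarrow> 'b) \<Rightarrow> (('a \<Rightarrow> ennreal) \<Rightarrow> ennreal) \<Rightarrow> ('b \<Rightarrow> ennreal) \<Rightarrow> ennreal" where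
  "pullback_norm A \<phi> \<rho> g = \<rho> (\<lambda>x. indicator A x * g (\<phi> x))"

locale measure_preserving_on =
  fixes M :: "'a measure" and A :: "'a set" and \<phi> :: "'a \<Rightarrow> 'b" and N :: "'b measure"
  assumes sets_A: "A \<in> sets M"
    and measurable_\<phi>: "\<phi> \<in> measurable (restrict_space M A) N"
    and distr_\<phi>: "distr (restrict_space M A) N \<phi> = N"
begin

lemma A_Int_space: "A \<inter> space M \<in> sets M"
  using sets_A by auto

lemma space_restrict_A: "space (restrict_space M A) = A"
  using sets.sets_into_space[OF sets_A] by (auto simp: space_restrict_space)

lemma borel_measurable_pullback:
  assumes "g \<in> borel_measurable N"
  shows "(\<lambda>x. indicator A x * g (\<phi> x) :: ennreal) \<in> borel_measurable M"
proof -
  have "(\<lambda>x. g (\<phi> x)) \<in> borel_measurable (restrict_space M A)"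
    using measurable_comp[OF measurable_\<phi> assms] by (simp add: comp_def)
  then have "(\<lambda>x. if x \<in> A then g (\<phi> x) else 0) \<in> borel_measurable M"
    using measurable_restrict_space_iff[OF A_Int_space, of "0::ennreal" borel "\<lambda>x. g (\<phi> x)"] by simp
  moreover have "(\<lambda>x. if x \<in> A then g (\<phi> x) else 0) = (\<lambda>x. indicator A x * g (\<phi> x))"
    by (auto simp: indicator_def)
  ultimately show ?thesis by simp
qed

lemma AE_pullbackI:
  assumes "AE y in N. P y"
  shows "AE x in M. x \<in> A \<longrightarrow> P (\<phi> x)"
proof -
  have "AE y in distr (restrict_space M A) N \<phi>. P y"
    using assms by (simp only: distr_\<phi>)
  then have "AE x in restrict_space M A. P (\<phi> x)"
    by (rule AE_distrD[OF measurable_\<phi>])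
  then show ?thesis
    by (simp only: AE_restrict_space_iff[OF A_Int_space])
qed

lemma AE_pullback_iff:
  assumes "{y \<in> space N. P y} \<in> sets N"
  shows "(AE x in M. x \<in> A \<longrightarrow> P (\<phi> x)) \<longleftrightarrow> (AE y in N. P y)"
proof -
  have "(AE y in N. P y) \<longleftrightarrow> (AE y in distr (restrict_space M A) N \<phi>. P y)"
    by (simp only: distr_\<phi>)
  also have "\<dots> \<longleftrightarrow> (AE x in restrict_space M A. P (\<phi> x))"
    by (rule AE_distr_iff[OF measurable_\<phi> assms])
  finally show ?thesis
    by (simp only: AE_restrict_space_iff[OF A_Int_space])
qed

lemma emeasure_pullback:
  assumes "E \<in> sets N"
  shows "\<phi> -` E \<inter> A \<in> sets M" "emeasure M (\<phi> -` E \<inter> A) = emeasure N E"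
proof -
  have E: "\<phi> -` E \<inter> space (restrict_space M A) \<in> sets (restrict_space M A)"
    by (rule measurable_sets[OF measurable_\<phi> assms])
  then show sets: "\<phi> -` E \<inter> A \<in> sets M"
    using sets_restrict_space_iff[OF A_Int_space] space_restrict_A by auto
  have "emeasure N E = emeasure (restrict_space M A) (\<phi> -` E \<inter> A)"
    using emeasure_distr[OF measurable_\<phi> assms] distr_\<phi> space_restrict_A by simp
  also have "\<dots> = emeasure M (\<phi> -` E \<inter> A)"
    by (rule emeasure_restrict_space[OF A_Int_space]) auto
  finally show "emeasure M (\<phi> -` E \<inter> A) = emeasure N E" ..
qed

lemma emeasure_superlevel_pullback:
  fixes g :: "'b \<Rightarrow> ennreal"
  assumes "g \<in> borel_measurable N"
  shows "emeasure M {x\<in>space M. s < indicator A x * g (\<phi> x)} = emeasure N {y\<in>space N. s < g y}"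
proof -
  have E: "{y\<in>space N. s < g y} \<in> sets N"
    by (rule sets_superlevel[OF assms])
  have "{x\<in>space M. s < indicator A x * g (\<phi> x)} = \<phi> -` {y\<in>space N. s < g y} \<inter> A"
    using measurable_space[OF measurable_\<phi>] space_restrict_A sets.sets_into_space[OF sets_A]
    by (auto simp: indicator_def)
  then show ?thesis using emeasure_pullback(2)[OF E] by simp
qed

lemma AE_pullback_zero_iff:
  fixes f :: "'b \<Rightarrow> ennreal"
  assumes "f \<in> borel_measurable N"
  shows "(AE x in M. indicator A x * f (\<phi> x) = 0) \<longleftrightarrow> (AE y in N. f y = 0)"
proof -
  have "{y \<in> space N. f y = 0} \<in> sets N" using assms by measurable
  then have "(AE x in M. x \<in> A \<longrightarrow> f (\<phi> x) = 0) \<longleftrightarrow> (AE y in N. f y = 0)"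
    by (rule AE_pullback_iff)
  moreover have "(AE x in M. indicator A x * f (\<phi> x) = 0) \<longleftrightarrow> (AE x in M. x \<in> A \<longrightarrow> f (\<phi> x) = 0)"
    by (intro AE_cong) (simp add: indicator_def)
  ultimately show ?thesis by simp
qed

lemma indicator_pullback:
  "(\<lambda>x. indicator A x * indicator E (\<phi> x)) = (indicator (\<phi> -` E \<inter> A) :: 'a \<Rightarrow> ennreal)"
  by (auto simp: indicator_def)

lemma set_nn_integral_pullback:
  assumes E: "E \<in> sets N" and f: "f \<in> borel_measurable N"
  shows "(\<integral>\<^sup>+y\<in>E. f y \<partial>N) = (\<integral>\<^sup>+x\<in>\<phi> -` E \<inter> A. indicator A x * f (\<phi> x) \<partial>M)"
proof -
  have "(\<integral>\<^sup>+y\<in>E. f y \<partial>N) = (\<integral>\<^sup>+x. f (\<phi> x) * indicator E (\<phi> x) \<partial>restrict_space M A)"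
    using f E by (subst (1) distr_\<phi>[symmetric], subst nn_integral_distr[OF measurable_\<phi>]) (auto simp: distr_\<phi>)
  also have "\<dots> = (\<integral>\<^sup>+x\<in>\<phi> -` E \<inter> A. indicator A x * f (\<phi> x) \<partial>M)"
    by (simp add: nn_integral_restrict_space[OF A_Int_space]) (auto intro!: nn_integral_cong simp: indicator_def)
  finally show ?thesis .
qed

lemma function_norm_pullback:
  assumes fn: "function_norm M \<rho>"
  shows "function_norm N (pullback_norm A \<phi> \<rho>)"
  unfolding function_norm_def pullback_norm_def
proof (intro conjI ballI allI impI)
  fix f :: "'b \<Rightarrow> ennreal" assume f: "f \<in> borel_measurable N"
  show "\<rho> (\<lambda>x. indicator A x * f (\<phi> x)) = 0 \<longleftrightarrow> (AE y in N. f y = 0)"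
    using function_normD_zero_iff[OF fn borel_measurable_pullback[OF f]] AE_pullback_zero_iff[OF f]
    by simp
next
  fix f :: "'b \<Rightarrow> ennreal" and a :: real assume f: "f \<in> borel_measurable N" and a: "0 \<le> a"
  show "\<rho> (\<lambda>x. indicator A x * (ennreal a * f (\<phi> x))) = ennreal a * \<rho> (\<lambda>x. indicator A x * f (\<phi> x))"
    using function_normD_homogeneous[OF fn borel_measurable_pullback[OF f] a]
    by (simp add: mult.left_commute)
next
  fix f g :: "'b \<Rightarrow> ennreal" assume f: "f \<in> borel_measurable N" and g: "g \<in> borel_measurable N"
  show "\<rho> (\<lambda>x. indicator A x * (f (\<phi> x) + g (\<phi> x))) \<le>
      \<rho> (\<lambda>x. indicator A x * f (\<phi> x)) + \<rho> (\<lambda>x. indicator A x * g (\<phi> x))"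
    using function_normD_triangle[OF fn borel_measurable_pullback[OF f] borel_measurable_pullback[OF g]]
    by (simp add: distrib_left)
next
  fix f g :: "'b \<Rightarrow> ennreal" assume f: "f \<in> borel_measurable N" and g: "g \<in> borel_measurable N"
    and le: "AE y in N. g y \<le> f y"
  have "AE x in M. indicator A x * g (\<phi> x) \<le> indicator A x * f (\<phi> x)"
    using AE_pullbackI[OF le] by eventually_elim (simp add: indicator_def)
  then show "\<rho> (\<lambda>x. indicator A x * g (\<phi> x)) \<le> \<rho> (\<lambda>x. indicator A x * f (\<phi> x))"
    by (rule function_normD_mono[OF fn borel_measurable_pullback[OF f] borel_measurable_pullback[OF g]])
next
  fix F :: "nat \<Rightarrow> 'b \<Rightarrow> ennreal" and f :: "'b \<Rightarrow> ennreal"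
  assume H: "(\<forall>n. F n \<in> borel_measurable N) \<and> f \<in> borel_measurable N \<and>
    (AE y in N. incseq (\<lambda>n. F n y) \<and> f y = (SUP n. F n y))"
  have "AE x in M. incseq (\<lambda>n. indicator A x * F n (\<phi> x)) \<and>
      indicator A x * f (\<phi> x) = (SUP n. indicator A x * F n (\<phi> x))"
    using AE_pullbackI[of "\<lambda>y. incseq (\<lambda>n. F n y) \<and> f y = (SUP n. F n y)"] H
    by (auto elim!: eventually_mono simp: indicator_def incseq_def)
  then show "\<rho> (\<lambda>x. indicator A x * f (\<phi> x)) = (SUP n. \<rho> (\<lambda>x. indicator A x * F n (\<phi> x)))"
    using H by (intro function_normD_Fatou[OF fn]) (auto intro: borel_measurable_pullback)
next
  fix E assume E: "E \<in> sets N" and fin: "emeasure N E < \<infinity>"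
  show "\<rho> (\<lambda>x. indicator A x * indicator E (\<phi> x)) < \<infinity>"
    unfolding indicator_pullback
    using function_normD_indicator_finite[OF fn] emeasure_pullback[OF E] fin by simp
next
  fix E assume E: "E \<in> sets N" and fin: "emeasure N E < \<infinity>"
  obtain C :: real where C: "\<forall>f\<in>borel_measurable M. (\<integral>\<^sup>+x\<in>\<phi> -` E \<inter> A. f x \<partial>M) \<le> ennreal C * \<rho> f"
    using function_normD_set_nn_integral[OF fn] emeasure_pullback[OF E] fin by metis
  show "\<exists>C::real. \<forall>f\<in>borel_measurable N.
      (\<integral>\<^sup>+y\<in>E. f y \<partial>N) \<le> ennreal C * \<rho> (\<lambda>x. indicator A x * f (\<phi> x))"
  proof (intro exI[of _ C] ballI)
    fix f :: "'b \<Rightarrow> ennreal" assume f: "f \<in> borel_measurable N"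
    show "(\<integral>\<^sup>+y\<in>E. f y \<partial>N) \<le> ennreal C * \<rho> (\<lambda>x. indicator A x * f (\<phi> x))"
      unfolding set_nn_integral_pullback[OF E f]
      by (rule C[rule_format, OF borel_measurable_pullback[OF f]])
  qed
qed

lemma ri_function_norm_pullback:
  assumes ri: "ri_function_norm M \<rho>"
  shows "ri_function_norm N (pullback_norm A \<phi> \<rho>)"
  unfolding ri_function_norm_def
proof (intro conjI ballI impI)
  show "function_norm N (pullback_norm A \<phi> \<rho>)"
    by (rule function_norm_pullback[OF ri_function_normD_function_norm[OF ri]])
  fix f g assume f: "f \<in> borel_measurable N" and g: "g \<in> borel_measurable N" and eq: "equimeasurable N f g"
  then have "equimeasurable M (\<lambda>x. indicator A x * f (\<phi> x)) (\<lambda>x. indicator A x * g (\<phi> x))"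
    by (simp add: equimeasurable_def emeasure_superlevel_pullback)
  then show "pullback_norm A \<phi> \<rho> f = pullback_norm A \<phi> \<rho> g"
    unfolding pullback_norm_def
    by (rule ri_function_normD_equimeasurable[OF ri borel_measurable_pullback[OF f] borel_measurable_pullback[OF g]])
qed

end

lemma measure_preserving_on_restrict_space:
  "\<Omega> \<in> sets M \<Longrightarrow> measure_preserving_on M \<Omega> (\<lambda>x. x) (restrict_space M \<Omega>)"
  by unfold_locales simp_all

lemma restrict_norm_eq_pullback_norm: "restrict_norm \<Omega> \<rho> = pullback_norm \<Omega> (\<lambda>x. x) \<rho>"
  by (simp add: fun_eq_iff restrict_norm_def pullback_norm_def)

lemma measure_preserving_on_restrict_space_subset:
  "\<Omega> \<in> sets M \<Longrightarrow> measure_preserving_on (restrict_space M \<Omega>) (space (restrict_space M \<Omega>)) \<phi> R \<Longrightarrow>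
    measure_preserving_on M \<Omega> \<phi> R"
  unfolding measure_preserving_on_def restrict_space_space by simp

lemma pullback_norm_restrict_norm: "pullback_norm A \<phi> (restrict_norm \<Omega> \<rho>) = pullback_norm (\<Omega> \<inter> A) \<phi> \<rho>"
  by (simp add: fun_eq_iff pullback_norm_def restrict_norm_def indicator_inter_arith mult.assoc)

lemma pullback_norm_eq:
  fixes g :: "'b \<Rightarrow> ennreal" and h :: "'c \<Rightarrow> ennreal"
  assumes ri: "ri_function_norm M \<rho>"
    and \<phi>: "measure_preserving_on M A \<phi> N" and \<psi>: "measure_preserving_on M B \<psi> N'"
    and g: "g \<in> borel_measurable N" and h: "h \<in> borel_measurable N'"
    and eq: "\<And>s. emeasure N {y\<in>space N. s < g y} = emeasure N' {y\<in>space N'. s < h y}"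
  shows "pullback_norm A \<phi> \<rho> g = pullback_norm B \<psi> \<rho> h"
  unfolding pullback_norm_def
proof (rule ri_function_normD_equimeasurable[OF ri])
  show "(\<lambda>x. indicator A x * g (\<phi> x)) \<in> borel_measurable M"
    by (rule measure_preserving_on.borel_measurable_pullback[OF \<phi> g])
  show "(\<lambda>x. indicator B x * h (\<psi> x)) \<in> borel_measurable M"
    by (rule measure_preserving_on.borel_measurable_pullback[OF \<psi> h])
  show "equimeasurable M (\<lambda>x. indicator A x * g (\<phi> x)) (\<lambda>x. indicator B x * h (\<psi> x))"
    unfolding equimeasurable_def measure_preserving_on.emeasure_superlevel_pullback[OF \<phi> g]
      measure_preserving_on.emeasure_superlevel_pullback[OF \<psi> h] eq by simp
qed

lemma ri_function_norm_restrict_space: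
  "\<Omega> \<in> sets M \<Longrightarrow> ri_function_norm M \<rho> \<Longrightarrow> ri_function_norm (restrict_space M \<Omega>) (restrict_norm \<Omega> \<rho>)"
  unfolding restrict_norm_eq_pullback_norm
  by (rule measure_preserving_on.ri_function_norm_pullback[OF measure_preserving_on_restrict_space])

section \<open>Nonatomic finite measures take all intermediate values\<close>

lemma nonatomic_measureD:
  assumes "finite_measure M" "nonatomic_measure M" "A \<in> sets M" "0 < measure M A"
  shows "\<exists>B\<in>sets M. B \<subseteq> A \<and> 0 < measure M B \<and> measure M B < measure M A"
proof -
  interpret finite_measure M by fact
  obtain B where "B \<in> sets M" "B \<subseteq> A" "0 < emeasure M B" "emeasure M B < emeasure M A"
    using assms unfolding nonatomic_measure_def by (auto simp: emeasure_eq_measure)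
  then show ?thesis by (intro bexI[of _ B]) (auto simp: emeasure_eq_measure ennreal_less_iff)
qed

lemma nonatomic_exists_subset_le_half:
  assumes fm: "finite_measure M" and na: "nonatomic_measure M"
    and A: "A \<in> sets M" and pos: "0 < measure M A"
  shows "\<exists>B\<in>sets M. B \<subseteq> A \<and> 0 < measure M B \<and> measure M B \<le> measure M A / 2"
proof -
  interpret finite_measure M by fact
  obtain B where B: "B \<in> sets M" "B \<subseteq> A" "0 < measure M B" "measure M B < measure M A"
    using nonatomic_measureD[OF fm na A pos] by blast
  have diff: "measure M (A - B) = measure M A - measure M B"
    using A B by (simp add: finite_measure_Diff)
  show ?thesis
  proof (cases "measure M B \<le> measure M A / 2")
    case False
    then show ?thesis using A B diff by (intro bexI[of _ "A - B"]) auto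
  qed (use B in blast)
qed

lemma nonatomic_exists_small_subset:
  assumes fm: "finite_measure M" and na: "nonatomic_measure M"
    and A: "A \<in> sets M" and pos: "0 < measure M A" and e: "0 < e"
  shows "\<exists>B\<in>sets M. B \<subseteq> A \<and> 0 < measure M B \<and> measure M B < e"
proof -
  have halves: "\<exists>B\<in>sets M. B \<subseteq> A \<and> 0 < measure M B \<and> measure M B \<le> measure M A / 2^n" for n
  proof (induction n)
    case (Suc n)
    then obtain B where B: "B \<in> sets M" "B \<subseteq> A" "0 < measure M B" "measure M B \<le> measure M A / 2^n"
      by blast
    then obtain B' where "B' \<in> sets M" "B' \<subseteq> B" "0 < measure M B'" "measure M B' \<le> measure M B / 2"
      using nonatomic_exists_subset_le_half[OF fm na] by blast
    with B show ?case by (intro bexI[of _ B']) auto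
  qed (use A pos in auto)
  obtain n where "measure M A / e < 2^n" using real_arch_pow[of 2 "measure M A / e"] by auto
  then have "measure M A / 2^n < e" using e by (simp add: field_simps)
  moreover obtain B where "B \<in> sets M" "B \<subseteq> A" "0 < measure M B" "measure M B \<le> measure M A / 2^n"
    using halves[of n] by blast
  ultimately show ?thesis by (intro bexI[of _ B]) auto
qed

lemma (in finite_measure) exists_nearly_maximal_subset:
  assumes "E \<in> sets M" "measure M E \<le> t"
  shows "\<exists>B\<in>sets M. B \<subseteq> A - E \<and> measure M E + measure M B \<le> t \<and>
    (\<forall>C\<in>sets M. C \<subseteq> A - E \<and> measure M E + measure M C \<le> t \<longrightarrow> measure M C \<le> 2 * measure M B)"
proof -
  define adm where "adm C \<longleftrightarrow> C \<in> sets M \<and> C \<subseteq> A - E \<and> measure M E + measure M C \<le> t" for C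
  define S where "S = Sup (measure M ` Collect adm)"
  have bdd: "bdd_above (measure M ` Collect adm)"
    by (rule bdd_aboveI[of _ "measure M (space M)"]) (auto simp: adm_def intro!: bounded_measure)
  have adm_le_S: "measure M C \<le> S" if "adm C" for C
    unfolding S_def using that by (intro cSup_upper bdd) auto
  obtain B where B: "adm B" "S \<le> 2 * measure M B"
  proof (cases "S \<le> 0")
    case True
    then show ?thesis using assms that[of "{}"] by (auto simp: adm_def)
  next
    case False
    have ne: "measure M ` Collect adm \<noteq> {}"
      using assms by (auto simp: adm_def intro!: exI[of _ "{}"])
    have "S / 2 < S" using False by simp
    then obtain B where "adm B" "S / 2 < measure M B"
      using less_cSup_iff[OF ne bdd] unfolding S_def by auto
    then show ?thesis using that by auto
  qed
  have "measure M C \<le> 2 * measure M B" if "adm C" for C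
    using adm_le_S[OF that] B(2) by linarith
  then show ?thesis using B(1) unfolding adm_def by blast
qed

lemma (in finite_measure) greedy_exhaustion:
  assumes "0 \<le> t"
  obtains E where "\<And>n. E n \<in> sets M \<and> E n \<subseteq> A \<and> measure M (E n) \<le> t" "incseq E"
    "\<And>n C. C \<in> sets M \<Longrightarrow> C \<subseteq> A - E n \<Longrightarrow> measure M (E n) + measure M C \<le> t \<Longrightarrow>
      measure M (E n) + measure M C / 2 \<le> measure M (E (Suc n))"
proof -
  define adm where "adm E \<longleftrightarrow> E \<in> sets M \<and> E \<subseteq> A \<and> measure M E \<le> t" for E
  have "\<forall>E. \<exists>B. adm E \<longrightarrow> B \<in> sets M \<and> B \<subseteq> A - E \<and> measure M E + measure M B \<le> t \<and>
    (\<forall>C\<in>sets M. C \<subseteq> A - E \<and> measure M E + measure M C \<le> t \<longrightarrow> measure M C \<le> 2 * measure M B)"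
  proof
    fix E show "\<exists>B. adm E \<longrightarrow> B \<in> sets M \<and> B \<subseteq> A - E \<and> measure M E + measure M B \<le> t \<and>
      (\<forall>C\<in>sets M. C \<subseteq> A - E \<and> measure M E + measure M C \<le> t \<longrightarrow> measure M C \<le> 2 * measure M B)"
    proof (cases "adm E")
      case True
      then show ?thesis using exists_nearly_maximal_subset[of E t A] unfolding adm_def by blast
    qed simp
  qed
  from choice[OF this] obtain B where B: "\<And>E. adm E \<Longrightarrow> B E \<in> sets M \<and> B E \<subseteq> A - E \<and>
    measure M E + measure M (B E) \<le> t \<and>
    (\<forall>C\<in>sets M. C \<subseteq> A - E \<and> measure M E + measure M C \<le> t \<longrightarrow> measure M C \<le> 2 * measure M (B E))"
    by blast
  define E where "E n = ((\<lambda>E. E \<union> B E) ^^ n) {}" for n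
  have E_Suc: "E (Suc n) = E n \<union> B (E n)" for n by (simp add: E_def)
  have measure_E_Suc: "measure M (E (Suc n)) = measure M (E n) + measure M (B (E n))"
    if "adm (E n)" for n
    using B[OF that] that unfolding E_Suc adm_def by (intro finite_measure_Union) auto
  have adm: "adm (E n)" for n
  proof (induction n)
    case (Suc n) then show ?case using B[OF Suc] measure_E_Suc[OF Suc] by (auto simp: adm_def E_Suc)
  qed (use assms in \<open>simp add: adm_def E_def\<close>)
  show thesis
  proof (rule that)
    show "E n \<in> sets M \<and> E n \<subseteq> A \<and> measure M (E n) \<le> t" for n using adm[of n] by (simp add: adm_def)
    show "incseq E" by (rule incseq_SucI) (simp add: E_Suc)
    fix n C assume "C \<in> sets M" "C \<subseteq> A - E n" "measure M (E n) + measure M C \<le> t"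
    then show "measure M (E n) + measure M C / 2 \<le> measure M (E (Suc n))"
      using B[OF adm[of n]] measure_E_Suc[OF adm[of n]] by auto
  qed
qed

text \<open>Sierpinski's theorem: a greedy exhaustion that falls short of \<open>t\<close> would leave room for a
  set \<open>C\<close> of positive measure, and then every greedy step would add at least \<open>\<mu>(C)/2\<close>.\<close>

lemma nonatomic_exists_subset_measure:
  assumes fm: "finite_measure M" and na: "nonatomic_measure M"
    and A: "A \<in> sets M" and t0: "0 \<le> t" and tA: "t \<le> measure M A"
  shows "\<exists>E\<in>sets M. E \<subseteq> A \<and> measure M E = t"
proof -
  interpret finite_measure M by fact
  obtain E where E: "\<And>n. E n \<in> sets M \<and> E n \<subseteq> A \<and> measure M (E n) \<le> t" and inc: "incseq E"
    and grow: "\<And>n C. C \<in> sets M \<Longrightarrow> C \<subseteq> A - E n \<Longrightarrow> measure M (E n) + measure M C \<le> t \<Longrightarrow>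
      measure M (E n) + measure M C / 2 \<le> measure M (E (Suc n))"
    using greedy_exhaustion[OF t0, of A] by blast
  define U where "U = (\<Union>n. E n)"
  have U: "U \<in> sets M" "U \<subseteq> A" using E by (auto simp: U_def)
  have EU: "E n \<subseteq> U" "measure M (E n) \<le> measure M U" for n
    using U by (auto simp: U_def intro!: finite_measure_mono)
  have "(\<lambda>n. measure M (E n)) \<longlonglongrightarrow> measure M U"
    unfolding U_def using E inc by (intro finite_Lim_measure_incseq) auto
  then have Ut: "measure M U \<le> t"
    by (rule LIMSEQ_le_const2) (use E in auto)
  have "\<not> measure M U < t"
  proof
    assume less: "measure M U < t"
    have "0 < measure M (A - U)" using U A less tA by (simp add: finite_measure_Diff)
    then obtain C where C: "C \<in> sets M" "C \<subseteq> A - U" "0 < measure M C" "measure M C < t - measure M U"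
      using nonatomic_exists_small_subset[OF fm na, of "A - U" "t - measure M U"] U A less by auto
    have step: "measure M (E n) + measure M C / 2 \<le> measure M (E (Suc n))" for n
      using C EU[of n] by (intro grow) auto
    have lower: "real n * (measure M C / 2) \<le> measure M (E n)" for n
    proof (induction n)
      case (Suc n)
      then show ?case using step[of n] by (simp add: algebra_simps)
    qed simp
    obtain n :: nat where "t / (measure M C / 2) < real n"
      using reals_Archimedean2 by blast
    then have "t < real n * (measure M C / 2)"
      using C(3) by (simp add: field_simps)
    then show False using lower[of n] E[of n] by linarith
  qed
  then show ?thesis using U Ut by (intro bexI[of _ U]) auto
qed

lemma nonatomic_exists_between_measure:
  assumes fm: "finite_measure M" and na: "nonatomic_measure M"
    and A: "A \<in> sets M" and B: "B \<in> sets M" and AB: "A \<subseteq> B"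
    and t1: "measure M A \<le> t" and t2: "t \<le> measure M B"
  shows "\<exists>C\<in>sets M. A \<subseteq> C \<and> C \<subseteq> B \<and> measure M C = t"
proof -
  interpret finite_measure M by fact
  have "measure M (B - A) = measure M B - measure M A" using A B AB by (simp add: finite_measure_Diff)
  then obtain E where E: "E \<in> sets M" "E \<subseteq> B - A" "measure M E = t - measure M A"
    using nonatomic_exists_subset_measure[OF fm na, of "B - A" "t - measure M A"] A B t1 t2 by auto
  have "measure M (A \<union> E) = measure M A + measure M E" using E A by (intro finite_measure_Union) auto
  then show ?thesis using E A AB by (intro bexI[of _ "A \<union> E"]) auto
qed

section \<open>A measure-preserving map onto an interval\<close>

definition midway_set :: "'a measure \<Rightarrow> 'a set \<Rightarrow> 'a set \<Rightarrow> 'a set" where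
  "midway_set M A B =
    (SOME C. C \<in> sets M \<and> A \<subseteq> C \<and> C \<subseteq> B \<and> measure M C = (measure M A + measure M B) / 2)"

lemma midway_set_between:
  assumes fm: "finite_measure M" and na: "nonatomic_measure M"
    and A: "A \<in> sets M" and B: "B \<in> sets M" and AB: "A \<subseteq> B"
  shows "midway_set M A B \<in> sets M \<and> A \<subseteq> midway_set M A B \<and> midway_set M A B \<subseteq> B \<and>
    measure M (midway_set M A B) = (measure M A + measure M B) / 2"
proof -
  interpret finite_measure M by fact
  have "measure M A \<le> measure M B" using A B AB by (intro finite_measure_mono) auto
  then have "\<exists>C\<in>sets M. A \<subseteq> C \<and> C \<subseteq> B \<and> measure M C = (measure M A + measure M B) / 2"
    by (intro nonatomic_exists_between_measure[OF fm na A B AB]) auto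
  then have "\<exists>C. C \<in> sets M \<and> A \<subseteq> C \<and> C \<subseteq> B \<and> measure M C = (measure M A + measure M B) / 2"
    by blast
  then show ?thesis
    unfolding midway_set_def by (rule someI_ex)
qed

fun dyadic_level :: "'a measure \<Rightarrow> nat \<Rightarrow> nat \<Rightarrow> 'a set" where
  "dyadic_level M 0 k = (if k = 0 then {} else space M)"
| "dyadic_level M (Suc n) k = (if even k then dyadic_level M n (k div 2)
      else midway_set M (dyadic_level M n (k div 2)) (dyadic_level M n (Suc (k div 2))))"

lemma dyadic_level_even: "dyadic_level M (Suc n) (2 * j) = dyadic_level M n j"
  by simp

lemma dyadic_level_odd:
  "dyadic_level M (Suc n) (Suc (2 * j)) = midway_set M (dyadic_level M n j) (dyadic_level M n (Suc j))"
  by simp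

declare dyadic_level.simps(2)[simp del]

lemma dyadic_level_Suc:
  assumes fm: "finite_measure M" and na: "nonatomic_measure M"
    and sets: "\<And>k. k \<le> 2^n \<Longrightarrow> dyadic_level M n k \<in> sets M"
    and measure: "\<And>k. k \<le> 2^n \<Longrightarrow> measure M (dyadic_level M n k) = measure M (space M) * k / 2^n"
    and mono: "\<And>k. k < 2^n \<Longrightarrow> dyadic_level M n k \<subseteq> dyadic_level M n (Suc k)"
  shows "k \<le> 2^Suc n \<Longrightarrow> dyadic_level M (Suc n) k \<in> sets M \<and>
      measure M (dyadic_level M (Suc n) k) = measure M (space M) * k / 2^Suc n"
    and "k < 2^Suc n \<Longrightarrow> dyadic_level M (Suc n) k \<subseteq> dyadic_level M (Suc n) (Suc k)"
proof -
  let ?L = "measure M (space M)" and ?D = "dyadic_level M"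
  have odd: "?D (Suc n) (Suc (2 * j)) \<in> sets M \<and> ?D n j \<subseteq> ?D (Suc n) (Suc (2 * j)) \<and>
      ?D (Suc n) (Suc (2 * j)) \<subseteq> ?D n (Suc j) \<and>
      measure M (?D (Suc n) (Suc (2 * j))) = ?L * Suc (2 * j) / 2^Suc n"
    if j: "j < 2^n" for j
  proof -
    have "(?L * j / 2^n + ?L * Suc j / 2^n) / 2 = ?L * Suc (2 * j) / 2^Suc n"
      by (simp add: field_simps)
    then show ?thesis
      using midway_set_between[OF fm na sets sets mono[OF j]] measure[of j] measure[of "Suc j"] j
      by (simp add: dyadic_level_odd)
  qed
  have parity: "(\<exists>j. k = 2 * j) \<or> (\<exists>j. k = Suc (2 * j))" by presburger
  show "k \<le> 2^Suc n \<Longrightarrow> ?D (Suc n) k \<in> sets M \<and> measure M (?D (Suc n) k) = ?L * k / 2^Suc n"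
    using parity sets measure odd by (auto simp: dyadic_level_even)
  show "k < 2^Suc n \<Longrightarrow> ?D (Suc n) k \<subseteq> ?D (Suc n) (Suc k)"
  proof (cases "even k")
    case True
    then obtain j where "k = 2 * j" by (rule evenE)
    moreover assume "k < 2^Suc n"
    ultimately show ?thesis using odd[of j] by (simp add: dyadic_level_even)
  next
    case False
    then obtain j where k: "k = Suc (2 * j)" by (metis oddE Suc_eq_plus1)
    moreover assume "k < 2^Suc n"
    ultimately have j: "j < 2^n" by simp
    have "Suc k = 2 * Suc j" using k by simp
    then have "?D (Suc n) (Suc k) = ?D n (Suc j)"
      by (simp only: dyadic_level_even)
    then show ?thesis using odd[OF j] k by simp
  qed
qed

lemma dyadic_level_invariant:
  assumes fm: "finite_measure M" and na: "nonatomic_measure M"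
  shows "(\<forall>k\<le>2^n. dyadic_level M n k \<in> sets M \<and>
      measure M (dyadic_level M n k) = measure M (space M) * k / 2^n) \<and>
    (\<forall>k<2^n. dyadic_level M n k \<subseteq> dyadic_level M n (Suc k))"
proof (induction n)
  case 0
  have "k \<le> 1 \<Longrightarrow> k = 0 \<or> k = 1" for k :: nat by auto
  then show ?case by auto
next
  case (Suc n)
  then show ?case using dyadic_level_Suc[OF fm na, of n] by simp
qed

lemma sets_dyadic_level:
  "finite_measure M \<Longrightarrow> nonatomic_measure M \<Longrightarrow> k \<le> 2^n \<Longrightarrow> dyadic_level M n k \<in> sets M"
  using dyadic_level_invariant[of M n] by simp

lemma measure_dyadic_level:
  "finite_measure M \<Longrightarrow> nonatomic_measure M \<Longrightarrow> k \<le> 2^n \<Longrightarrow>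
    measure M (dyadic_level M n k) = measure M (space M) * k / 2^n"
  using dyadic_level_invariant[of M n] by simp

lemma dyadic_level_mono:
  assumes fm: "finite_measure M" and na: "nonatomic_measure M" and "k \<le> k'" and "k' \<le> 2^n"
  shows "dyadic_level M n k \<subseteq> dyadic_level M n k'"
  using assms(3,4)
proof (induction k' rule: dec_induct)
  case (step m)
  then have "dyadic_level M n m \<subseteq> dyadic_level M n (Suc m)"
    using dyadic_level_invariant[OF fm na, of n] by simp
  with step show ?case by simp
qed simp

lemma dyadic_level_refine: "dyadic_level M (n + m) (k * 2^m) = dyadic_level M n k"
proof (induction m)
  case (Suc m)
  have "dyadic_level M (n + Suc m) (k * 2 ^ Suc m) = dyadic_level M (Suc (n + m)) (2 * (k * 2^m))"
    by (simp add: mult.left_commute)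
  then show ?case using Suc by (simp only: dyadic_level_even)
qed simp

lemma dyadic_level_subset:
  assumes fm: "finite_measure M" and na: "nonatomic_measure M"
    and k: "k \<le> 2^n" and "k' \<le> 2^n'" and le: "real k' / 2^n' \<le> real k / 2^n"
  shows "dyadic_level M n' k' \<subseteq> dyadic_level M n k"
proof -
  have "real (k' * 2^n) \<le> real (k * 2^n')" using le by (simp add: field_simps)
  then have "k' * 2^n \<le> k * 2^n'" by (simp only: of_nat_le_iff)
  moreover have "k * 2^n' \<le> 2^(n' + n)" using k by (simp add: power_add)
  ultimately have "dyadic_level M (n' + n) (k' * 2^n) \<subseteq> dyadic_level M (n' + n) (k * 2^n')"
    by (rule dyadic_level_mono[OF fm na])
  moreover have "dyadic_level M (n' + n) (k * 2^n') = dyadic_level M n k"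
    using dyadic_level_refine[of M n n' k] by (simp add: add.commute)
  ultimately show ?thesis by (simp add: dyadic_level_refine)
qed

definition dyadic_marks :: "'a measure \<Rightarrow> 'a \<Rightarrow> real set" where
  "dyadic_marks M x = {real k / 2^n | n k. k \<le> 2^n \<and> x \<in> dyadic_level M n k}"

definition dyadic_rank :: "'a measure \<Rightarrow> 'a \<Rightarrow> real" where
  "dyadic_rank M x = measure M (space M) * Inf (dyadic_marks M x)"

lemma dyadic_marks_bounds:
  assumes "x \<in> space M"
  shows "1 \<in> dyadic_marks M x" "bdd_below (dyadic_marks M x)"
    "\<And>d. d \<in> dyadic_marks M x \<Longrightarrow> 0 \<le> d \<and> d \<le> 1"
proof -
  have "x \<in> dyadic_level M 0 1" using assms by simp
  then show "1 \<in> dyadic_marks M x"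
    unfolding dyadic_marks_def by (intro CollectI exI[of _ 0] exI[of _ "1::nat"]) simp
  show "\<And>d. d \<in> dyadic_marks M x \<Longrightarrow> 0 \<le> d \<and> d \<le> 1" unfolding dyadic_marks_def by auto
  then show "bdd_below (dyadic_marks M x)" by (intro bdd_belowI[of _ 0]) auto
qed

lemma dyadic_rank_bounds:
  assumes "x \<in> space M"
  shows "0 \<le> dyadic_rank M x" "dyadic_rank M x \<le> measure M (space M)"
proof -
  note marks = dyadic_marks_bounds[OF assms]
  have "0 \<le> Inf (dyadic_marks M x)" using marks by (intro cInf_greatest) auto
  moreover have "Inf (dyadic_marks M x) \<le> 1" using marks by (intro cInf_lower) auto
  ultimately show "0 \<le> dyadic_rank M x" "dyadic_rank M x \<le> measure M (space M)"
    unfolding dyadic_rank_def by (auto intro: mult_left_le)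
qed

lemma dyadic_rank_le_of_mem:
  assumes fm: "finite_measure M" and na: "nonatomic_measure M"
    and k: "k \<le> 2^n" and x: "x \<in> dyadic_level M n k"
  shows "x \<in> space M" "dyadic_rank M x \<le> measure M (space M) * k / 2^n"
proof -
  show "x \<in> space M" using sets_dyadic_level[OF fm na k] x sets.sets_into_space by blast
  moreover have "real k / 2^n \<in> dyadic_marks M x" using x k unfolding dyadic_marks_def by blast
  ultimately have "Inf (dyadic_marks M x) \<le> real k / 2^n"
    using dyadic_marks_bounds by (intro cInf_lower) auto
  from mult_left_mono[OF this measure_nonneg]
  show "dyadic_rank M x \<le> measure M (space M) * k / 2^n"
    by (simp add: dyadic_rank_def)
qed

lemma dyadic_rank_less_eq_UN:
  assumes fm: "finite_measure M" and na: "nonatomic_measure M" and L: "0 < measure M (space M)"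
  shows "{x\<in>space M. dyadic_rank M x < s} =
    (\<Union>(n, k)\<in>{(n, k). k \<le> 2^n \<and> measure M (space M) * k / 2^n < s}. dyadic_level M n k)"
    (is "?lhs = ?rhs")
proof
  let ?L = "measure M (space M)"
  show "?lhs \<subseteq> ?rhs"
  proof
    fix x assume "x \<in> ?lhs"
    then have x: "x \<in> space M" "Inf (dyadic_marks M x) < s / ?L"
      using L by (auto simp: dyadic_rank_def field_simps)
    then obtain d where "d \<in> dyadic_marks M x" "d < s / ?L"
      using cInf_less_iff[of "dyadic_marks M x"] dyadic_marks_bounds[OF x(1)] by blast
    moreover obtain n k where "d = real k / 2^n" "k \<le> 2^n" "x \<in> dyadic_level M n k"
      using \<open>d \<in> dyadic_marks M x\<close> unfolding dyadic_marks_def by blast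
    ultimately have "?L * k / 2^n < s" "k \<le> 2^n" "x \<in> dyadic_level M n k"
      using L by (auto simp: field_simps)
    then show "x \<in> ?rhs" by auto
  qed
  show "?rhs \<subseteq> ?lhs"
  proof
    fix x assume "x \<in> ?rhs"
    then obtain n k where "k \<le> 2^n" "?L * k / 2^n < s" "x \<in> dyadic_level M n k" by auto
    then show "x \<in> ?lhs" using dyadic_rank_le_of_mem[OF fm na, of k n x] by auto
  qed
qed

lemma borel_measurable_dyadic_rank:
  assumes fm: "finite_measure M" and na: "nonatomic_measure M" and L: "0 < measure M (space M)"
  shows "dyadic_rank M \<in> borel_measurable M"
proof (subst borel_measurable_iff_less, intro allI)
  fix s
  show "{x \<in> space M. dyadic_rank M x < s} \<in> sets M"
    unfolding dyadic_rank_less_eq_UN[OF fm na L]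
    by (intro sets.countable_UN') (auto intro: sets_dyadic_level[OF fm na])
qed

lemma dyadic_rank_less_imp_mem:
  assumes fm: "finite_measure M" and na: "nonatomic_measure M" and L: "0 < measure M (space M)"
    and k: "k \<le> 2^n"
  shows "{x\<in>space M. dyadic_rank M x < measure M (space M) * k / 2^n} \<subseteq> dyadic_level M n k"
proof
  fix x assume "x \<in> {x\<in>space M. dyadic_rank M x < measure M (space M) * k / 2^n}"
  then obtain n' k' where "k' \<le> 2^n'" "x \<in> dyadic_level M n' k'"
      "measure M (space M) * k' / 2^n' < measure M (space M) * k / 2^n"
    unfolding dyadic_rank_less_eq_UN[OF fm na L] by auto
  moreover from this(3) have "real k' / 2^n' \<le> real k / 2^n"
    using L by (simp add: field_simps)
  ultimately show "x \<in> dyadic_level M n k"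
    using dyadic_level_subset[OF fm na k] by blast
qed

lemma measure_dyadic_rank_le_approx:
  assumes fm: "finite_measure M" and na: "nonatomic_measure M" and L: "0 < measure M (space M)"
    and t: "0 \<le> t" "t < measure M (space M)"
  shows "\<bar>measure M {x\<in>space M. dyadic_rank M x \<le> t} - t\<bar> \<le> measure M (space M) / 2^n"
proof -
  interpret finite_measure M by fact
  let ?L = "measure M (space M)" and ?F = "measure M {x\<in>space M. dyadic_rank M x \<le> t}"
  have [measurable]: "dyadic_rank M \<in> borel_measurable M"
    by (rule borel_measurable_dyadic_rank[OF fm na L])
  define j where "j = nat \<lfloor>t * 2^n / ?L\<rfloor>"
  have "0 \<le> t * 2^n / ?L" using t L by simp
  then have j: "real j \<le> t * 2^n / ?L" "t * 2^n / ?L < real j + 1"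
    unfolding j_def by linarith+
  have "t * 2^n / ?L < 2^n" using t L by (simp add: field_simps)
  then have "real j < 2^n" using j by linarith
  then have jn: "Suc j \<le> 2^n" by (metis Suc_leI of_nat_less_iff of_nat_numeral of_nat_power)
  have lo: "?L * j / 2^n \<le> t" and hi: "t < ?L * Suc j / 2^n"
    using j L by (simp_all add: field_simps)
  have "dyadic_level M n j \<subseteq> {x\<in>space M. dyadic_rank M x \<le> t}"
    using dyadic_rank_le_of_mem[OF fm na, of j n] jn lo by force
  then have "measure M (dyadic_level M n j) \<le> ?F"
    by (rule finite_measure_mono) measurable
  then have "?L * j / 2^n \<le> ?F"
    using measure_dyadic_level[OF fm na, of j n] jn by simp
  moreover have "{x\<in>space M. dyadic_rank M x \<le> t} \<subseteq> dyadic_level M n (Suc j)"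
    using dyadic_rank_less_imp_mem[OF fm na L jn] hi by force
  then have "?F \<le> ?L * Suc j / 2^n"
    using measure_dyadic_level[OF fm na jn] sets_dyadic_level[OF fm na jn] by (metis finite_measure_mono)
  moreover have "?L * Suc j / 2^n = ?L * j / 2^n + ?L / 2^n" by (simp add: field_simps)
  ultimately show ?thesis using lo hi by linarith
qed

lemma measure_dyadic_rank_le:
  assumes fm: "finite_measure M" and na: "nonatomic_measure M" and L: "0 < measure M (space M)"
  shows "measure M {x\<in>space M. dyadic_rank M x \<le> t} = max 0 (min t (measure M (space M)))"
proof -
  let ?L = "measure M (space M)" and ?F = "measure M {x\<in>space M. dyadic_rank M x \<le> t}"
  consider "t < 0" | "?L \<le> t" | "0 \<le> t" "t < ?L" by linarith
  then show ?thesis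
  proof cases
    case 1
    then have e: "{x\<in>space M. dyadic_rank M x \<le> t} = {}" using dyadic_rank_bounds(1)[of _ M] by force
    show ?thesis unfolding e using 1 by simp
  next
    case 2
    then have e: "{x\<in>space M. dyadic_rank M x \<le> t} = space M" using dyadic_rank_bounds(2)[of _ M] by force
    show ?thesis unfolding e using 2 L by simp
  next
    case 3
    have "?F = t"
    proof (rule ccontr)
      assume "?F \<noteq> t"
      then have d: "0 < \<bar>?F - t\<bar>" by simp
      obtain n where "?L / \<bar>?F - t\<bar> < 2^n" using real_arch_pow[of 2 "?L / \<bar>?F - t\<bar>"] by auto
      then have "?L / 2^n < \<bar>?F - t\<bar>" using d by (simp add: field_simps)
      then show False using measure_dyadic_rank_le_approx[OF fm na L 3, of n] by linarith
    qed
    then show ?thesis using 3 by simp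
  qed
qed

lemma distr_dyadic_rank_borel:
  assumes fm: "finite_measure M" and na: "nonatomic_measure M" and L: "0 < measure M (space M)"
  shows "distr M borel (dyadic_rank M) = density lborel (indicator {0..measure M (space M)})"
proof -
  interpret finite_measure M by fact
  let ?L = "measure M (space M)"
  let ?D = "density lborel (indicator {0..?L}) :: real measure"
  have [measurable]: "dyadic_rank M \<in> borel_measurable M"
    by (rule borel_measurable_dyadic_rank[OF fm na L])
  have emeasure_D: "emeasure ?D A = emeasure lborel ({0..?L} \<inter> A)" if "A \<in> sets borel" for A
    using that by (intro emeasure_restricted) auto
  have "finite_measure ?D"
    using emeasure_D[of UNIV] by (intro finite_measureI) simp
  then have "finite_borel_measure ?D"
    unfolding finite_borel_measure_def finite_borel_measure_axioms_def by simp
  moreover have "finite_borel_measure (distr M borel (dyadic_rank M))"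
    unfolding finite_borel_measure_def finite_borel_measure_axioms_def
    by (auto intro: finite_measure_distr)
  moreover have "cdf (distr M borel (dyadic_rank M)) x = cdf ?D x" for x
  proof -
    have "cdf (distr M borel (dyadic_rank M)) x = measure M {y\<in>space M. dyadic_rank M y \<le> x}"
      unfolding cdf_def by (subst measure_distr) (auto simp: vimage_def Int_def conj_commute)
    also have "\<dots> = max 0 (min x ?L)" by (rule measure_dyadic_rank_le[OF fm na L])
    also have "\<dots> = enn2real (emeasure lborel ({0..?L} \<inter> {..x}))"
    proof (cases "x < 0")
      case False
      then have "{0..?L} \<inter> {..x} = {0..min x ?L}" by auto
      then show ?thesis using False L by simp
    qed simp
    also have "\<dots> = cdf ?D x"
      using emeasure_D[of "{..x}"] by (simp add: cdf_def measure_def)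
    finally show ?thesis .
  qed
  ultimately show ?thesis using cdf_unique' by blast
qed

lemma measure_preserving_dyadic_rank:
  assumes fm: "finite_measure M" and na: "nonatomic_measure M" and L: "0 < measure M (space M)"
  shows "measure_preserving_on M (space M) (dyadic_rank M) (rep_space M)"
proof
  let ?L = "measure M (space M)" and ?\<tau> = "dyadic_rank M"
  have "?\<tau> \<in> measurable M lborel"
    using borel_measurable_dyadic_rank[OF fm na L] by simp
  moreover have "?\<tau> \<in> space M \<rightarrow> {0..?L}" using dyadic_rank_bounds[of _ M] by auto
  ultimately have \<tau>: "?\<tau> \<in> measurable M (rep_space M)"
    unfolding rep_space_def by (intro measurable_restrict_space2)
  then show "?\<tau> \<in> measurable (restrict_space M (space M)) (rep_space M)"
    by (simp add: restrict_space_space)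
  have "distr M (rep_space M) ?\<tau> = rep_space M"
  proof (rule measure_eqI)
    fix A assume "A \<in> sets (distr M (rep_space M) ?\<tau>)"
    then have A: "A \<in> sets (rep_space M)" "A \<subseteq> {0..?L}" "A \<in> sets borel"
      using sets_restrict_space_iff[of "{0..?L}" lborel] by (auto simp: rep_space_def)
    have "emeasure (distr M (rep_space M) ?\<tau>) A = emeasure (distr M borel ?\<tau>) A"
      using A \<tau> borel_measurable_dyadic_rank[OF fm na L] by (simp add: emeasure_distr)
    also have "\<dots> = emeasure lborel ({0..?L} \<inter> A)"
      unfolding distr_dyadic_rank_borel[OF fm na L] using A by (intro emeasure_restricted) auto
    also have "\<dots> = emeasure (rep_space M) A"
      unfolding rep_space_def using A by (subst emeasure_restrict_space) (auto simp: Int_absorb1)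
    finally show "emeasure (distr M (rep_space M) ?\<tau>) A = emeasure (rep_space M) A" .
  qed simp
  then show "distr (restrict_space M (space M)) (rep_space M) ?\<tau> = rep_space M"
    by (simp add: restrict_space_space)
qed simp

lemma emeasure_superlevel_le_of_greater:
  fixes f :: "'a \<Rightarrow> ennreal"
  assumes f: "f \<in> borel_measurable M"
    and le: "\<And>s'. s < s' \<Longrightarrow> emeasure M {x\<in>space M. s' < f x} \<le> c"
  shows "emeasure M {x\<in>space M. s < f x} \<le> c"
proof (cases "s = \<infinity>")
  case False
  define s' where "s' n = s + ennreal (inverse (real (Suc n)))" for n
  have less: "s < s' n" for n
  proof -
    have "s + 0 < s + ennreal (inverse (real (Suc n)))"
      using False by (subst ennreal_add_left_cancel_less) auto
    then show ?thesis by (simp add: s'_def)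
  qed
  have "s' \<longlonglongrightarrow> s + ennreal 0"
    unfolding s'_def by (intro tendsto_add tendsto_const tendsto_ennrealI LIMSEQ_inverse_real_of_nat)
  then have lim: "s' \<longlonglongrightarrow> s" by simp
  have dec: "s' (Suc n) \<le> s' n" for n
    unfolding s'_def by (intro add_left_mono ennreal_leI) (simp add: field_simps)
  have inc: "incseq (\<lambda>n. {x\<in>space M. s' n < f x})"
    by (intro incseq_SucI) (auto intro: le_less_trans[OF dec])
  have "{x\<in>space M. s < f x} = (\<Union>n. {x\<in>space M. s' n < f x})"
  proof (intro equalityI subsetI)
    fix x assume x: "x \<in> {x\<in>space M. s < f x}"
    then have "eventually (\<lambda>n. s' n < f x) sequentially"
      using order_tendstoD(2)[OF lim] by auto
    then obtain n where "s' n < f x" by (auto dest: eventually_happens)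
    then show "x \<in> (\<Union>n. {x\<in>space M. s' n < f x})" using x by auto
  qed (auto intro: less_trans[OF less])
  also have "emeasure M \<dots> = (SUP n. emeasure M {x\<in>space M. s' n < f x})"
    using inc sets_superlevel[OF f] by (intro SUP_emeasure_incseq[symmetric]) auto
  also have "\<dots> \<le> c" using le less by (intro SUP_least) auto
  finally show ?thesis .
qed simp

lemma decr_rearr_le_iff:
  fixes f :: "'a \<Rightarrow> ennreal"
  assumes f: "f \<in> borel_measurable M"
  shows "decr_rearr M f t \<le> s \<longleftrightarrow> emeasure M {x\<in>space M. s < f x} \<le> ennreal t"
proof
  assume "emeasure M {x\<in>space M. s < f x} \<le> ennreal t"
  then show "decr_rearr M f t \<le> s" unfolding decr_rearr_def by (intro Inf_lower) simp
next
  assume le: "decr_rearr M f t \<le> s"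
  show "emeasure M {x\<in>space M. s < f x} \<le> ennreal t"
  proof (rule emeasure_superlevel_le_of_greater[OF f])
    fix s' assume "s < s'"
    with le have "decr_rearr M f t < s'" by (rule le_less_trans)
    then obtain s'' where s'': "emeasure M {x\<in>space M. s'' < f x} \<le> ennreal t" "s'' < s'"
      unfolding decr_rearr_def by (auto simp: Inf_less_iff)
    have "emeasure M {x\<in>space M. s' < f x} \<le> emeasure M {x\<in>space M. s'' < f x}"
      using s''(2) sets_superlevel[OF f] by (intro emeasure_mono) auto
    then show "emeasure M {x\<in>space M. s' < f x} \<le> ennreal t" using s''(1) by simp
  qed
qed

lemma less_decr_rearr_iff:
  fixes f :: "'a \<Rightarrow> ennreal"
  assumes "f \<in> borel_measurable M"
  shows "s < decr_rearr M f t \<longleftrightarrow> ennreal t < emeasure M {x\<in>space M. s < f x}"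
  using decr_rearr_le_iff[OF assms, of t s] by (simp add: not_le[symmetric])

lemma sets_borel_ennreal_less: "{t::real. ennreal t < c} \<in> sets borel"
proof -
  have "{t \<in> space borel. ennreal t < c} \<in> sets borel" by measurable
  then show ?thesis by simp
qed

lemma borel_measurable_decr_rearr:
  fixes f :: "'a \<Rightarrow> ennreal"
  assumes f: "f \<in> borel_measurable M"
  shows "decr_rearr M f \<in> borel_measurable borel"
proof (rule borel_measurableI_greater)
  fix a
  have "{t \<in> space borel. a < decr_rearr M f t} = {t. ennreal t < emeasure M {x\<in>space M. a < f x}}"
    using less_decr_rearr_iff[OF f] by auto
  also have "\<dots> \<in> sets borel"
    by (rule sets_borel_ennreal_less)
  finally show "{t \<in> space borel. a < decr_rearr M f t} \<in> sets borel" .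
qed

lemma emeasure_lborel_ennreal_less:
  assumes L: "0 \<le> L" and c: "c \<le> ennreal L"
  shows "emeasure lborel {t\<in>{0..L}. ennreal t < c} = c"
proof -
  define a where "a = enn2real c"
  have a0: "0 \<le> a" by (simp add: a_def)
  have c_eq: "c = ennreal a" using c unfolding a_def by (cases c) (auto simp: top_unique)
  have "a \<le> L" using c L c_eq by (simp add: ennreal_le_iff)
  then have "{t\<in>{0..L}. ennreal t < c} = {0..<a}"
    using a0 unfolding c_eq by (auto simp: ennreal_less_iff)
  then show ?thesis using a0 c_eq by simp
qed

lemma space_rep_space: "space (rep_space M) = {0..measure M (space M)}"
  unfolding rep_space_def by simp

lemma emeasure_rep_space: "{0..measure M (space M)} \<inter> A \<in> sets borel \<Longrightarrow>
    emeasure (rep_space M) ({0..measure M (space M)} \<inter> A) = emeasure lborel ({0..measure M (space M)} \<inter> A)"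
  unfolding rep_space_def by (intro emeasure_restrict_space) auto

lemma borel_measurable_rep_space:
  "h \<in> borel_measurable borel \<Longrightarrow> h \<in> borel_measurable (rep_space M)"
  unfolding rep_space_def by (rule measurable_restrict_space1) simp

lemma finite_measure_rep_space: "finite_measure (rep_space M)"
  unfolding rep_space_def
  by (rule finite_measureI) (simp add: space_restrict_space emeasure_restrict_space)

lemma rep_space_rep_space: "rep_space (rep_space M) = rep_space M"
proof -
  have "measure (rep_space M) (space (rep_space M)) = measure M (space M)"
    unfolding rep_space_def by (simp add: measure_restrict_space)
  then show ?thesis unfolding rep_space_def[of "rep_space M"] by (simp add: rep_space_def[symmetric])
qed

lemma emeasure_superlevel_decr_rearr:
  fixes f :: "'a \<Rightarrow> ennreal"
  assumes fm: "finite_measure M" and f: "f \<in> borel_measurable M"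
  shows "emeasure (rep_space M) {t\<in>space (rep_space M). s < decr_rearr M f t} =
    emeasure M {x\<in>space M. s < f x}"
proof -
  interpret finite_measure M by fact
  let ?L = "measure M (space M)" and ?c = "emeasure M {x\<in>space M. s < f x}"
  have c: "?c \<le> ennreal ?L"
    using emeasure_space[of M "{x\<in>space M. s < f x}"] by (simp add: emeasure_eq_measure)
  have "{t\<in>space (rep_space M). s < decr_rearr M f t} = {0..?L} \<inter> {t. ennreal t < ?c}"
    unfolding space_rep_space using less_decr_rearr_iff[OF f] by auto
  then have "emeasure (rep_space M) {t\<in>space (rep_space M). s < decr_rearr M f t} =
      emeasure (rep_space M) ({0..?L} \<inter> {t. ennreal t < ?c})" by simp
  also have "\<dots> = emeasure lborel ({0..?L} \<inter> {t. ennreal t < ?c})"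
    by (intro emeasure_rep_space sets.Int sets_borel_ennreal_less) simp
  also have "\<dots> = ?c" using emeasure_lborel_ennreal_less[OF _ c] by (simp add: Int_def)
  finally show ?thesis .
qed

lemma decr_rearr_cong:
  "(\<And>s. emeasure M {x\<in>space M. s < f x} = emeasure N {x\<in>space N. s < g x}) \<Longrightarrow>
    decr_rearr M f = decr_rearr N g"
  unfolding decr_rearr_def by simp

section \<open>The Luxemburg representation\<close>

lemma is_luxemburg_rep_pullback:
  assumes fm: "finite_measure M" and na: "nonatomic_measure M" and L: "0 < measure M (space M)"
    and ri: "ri_function_norm M \<rho>"
  shows "is_luxemburg_rep M \<rho> (pullback_norm (space M) (dyadic_rank M) \<rho>)"
  unfolding is_luxemburg_rep_def
proof (intro conjI ballI)
  interpret measure_preserving_on M "space M" "dyadic_rank M" "rep_space M"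
    by (rule measure_preserving_dyadic_rank[OF fm na L])
  show "ri_function_norm (rep_space M) (pullback_norm (space M) (dyadic_rank M) \<rho>)"
    by (rule ri_function_norm_pullback[OF ri])
  fix f :: "'a \<Rightarrow> ennreal" assume f: "f \<in> borel_measurable M"
  have f': "decr_rearr M f \<in> borel_measurable (rep_space M)"
    by (rule borel_measurable_rep_space[OF borel_measurable_decr_rearr[OF f]])
  have "equimeasurable M f (\<lambda>x. indicator (space M) x * decr_rearr M f (dyadic_rank M x))"
    unfolding equimeasurable_def emeasure_superlevel_pullback[OF f']
      emeasure_superlevel_decr_rearr[OF fm f] by simp
  then show "\<rho> f = pullback_norm (space M) (dyadic_rank M) \<rho> (decr_rearr M f)"
    unfolding pullback_norm_def
    by (rule ri_function_normD_equimeasurable[OF ri f borel_measurable_pullback[OF f']])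
qed

lemma is_luxemburg_rep_unique:
  assumes fm: "finite_measure M" and na: "nonatomic_measure M" and L: "0 < measure M (space M)"
    and rep: "is_luxemburg_rep M \<rho> \<rho>'" and g: "g \<in> borel_measurable (rep_space M)"
  shows "\<rho>' g = pullback_norm (space M) (dyadic_rank M) \<rho> g"
proof -
  interpret measure_preserving_on M "space M" "dyadic_rank M" "rep_space M"
    by (rule measure_preserving_dyadic_rank[OF fm na L])
  let ?R = "rep_space M" and ?g = "\<lambda>x. indicator (space M) x * g (dyadic_rank M x)"
  have ri: "ri_function_norm ?R \<rho>'" and \<rho>_eq: "\<And>f. f \<in> borel_measurable M \<Longrightarrow> \<rho> f = \<rho>' (decr_rearr M f)"
    using rep unfolding is_luxemburg_rep_def by auto
  have "equimeasurable ?R g (decr_rearr ?R g)"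
    using emeasure_superlevel_decr_rearr[OF finite_measure_rep_space g]
    unfolding equimeasurable_def rep_space_rep_space by simp
  then have "\<rho>' g = \<rho>' (decr_rearr ?R g)"
    by (intro ri_function_normD_equimeasurable[OF ri g]
        borel_measurable_rep_space borel_measurable_decr_rearr g)
  also have "decr_rearr ?R g = decr_rearr M ?g"
    by (rule decr_rearr_cong) (simp add: emeasure_superlevel_pullback[OF g])
  also have "\<rho>' \<dots> = \<rho> ?g"
    using \<rho>_eq[OF borel_measurable_pullback[OF g]] ..
  finally show ?thesis by (simp add: pullback_norm_def)
qed

lemma is_luxemburg_rep_luxemburg_norm:
  assumes fm: "finite_measure M" and na: "nonatomic_measure M" and L: "0 < measure M (space M)"
    and ri: "ri_function_norm M \<rho>"
  shows "is_luxemburg_rep M \<rho> (luxemburg_norm M \<rho>)"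
  unfolding luxemburg_norm_def
  by (rule someI[of "is_luxemburg_rep M \<rho>", OF is_luxemburg_rep_pullback[OF fm na L ri]])

lemma luxemburg_norm_eq_pullback:
  assumes fm: "finite_measure M" and na: "nonatomic_measure M" and L: "0 < measure M (space M)"
    and ri: "ri_function_norm M \<rho>" and g: "g \<in> borel_measurable (rep_space M)"
  shows "luxemburg_norm M \<rho> g = pullback_norm (space M) (dyadic_rank M) \<rho> g"
  by (rule is_luxemburg_rep_unique[OF fm na L is_luxemburg_rep_luxemburg_norm[OF fm na L ri] g])

lemma nonatomic_measure_restrict_space:
  assumes na: "nonatomic_measure M" and \<Omega>: "\<Omega> \<in> sets M"
  shows "nonatomic_measure (restrict_space M \<Omega>)"
  unfolding nonatomic_measure_def
proof (intro ballI impI)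
  have \<Omega>': "\<Omega> \<inter> space M \<in> sets M" using \<Omega> by auto
  fix A assume A: "A \<in> sets (restrict_space M \<Omega>)" and pos: "0 < emeasure (restrict_space M \<Omega>) A"
  then have A': "A \<subseteq> \<Omega>" "A \<in> sets M" using sets_restrict_space_iff[OF \<Omega>'] by auto
  then obtain B where "B \<in> sets M" "B \<subseteq> A" "0 < emeasure M B" "emeasure M B < emeasure M A"
    using na pos emeasure_restrict_space[OF \<Omega>'] unfolding nonatomic_measure_def by auto
  then show "\<exists>B\<in>sets (restrict_space M \<Omega>). B \<subseteq> A \<and> 0 < emeasure (restrict_space M \<Omega>) B \<and>
      emeasure (restrict_space M \<Omega>) B < emeasure (restrict_space M \<Omega>) A"
    using A' sets_restrict_space_iff[OF \<Omega>'] emeasure_restrict_space[OF \<Omega>']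
    by (intro bexI[of _ B]) auto
qed

lemma measure_space_restrict_space:
  "\<Omega> \<in> sets M \<Longrightarrow> measure (restrict_space M \<Omega>) (space (restrict_space M \<Omega>)) = measure M \<Omega>"
  using sets.sets_into_space by (simp add: measure_restrict_space space_restrict_space Int_absorb2)

lemma rep_space_restrict_space:
  "\<Omega> \<in> sets M \<Longrightarrow> rep_space (restrict_space M \<Omega>) = restrict_space lborel {0..measure M \<Omega>}"
  unfolding rep_space_def by (subst measure_space_restrict_space) simp_all

lemma restrict_norm_indicator: "E \<subseteq> \<Omega> \<Longrightarrow> restrict_norm \<Omega> \<rho> (indicator E) = \<rho> (indicator E)"
proof -
  assume "E \<subseteq> \<Omega>"
  then have "(\<lambda>x. indicator \<Omega> x * indicator E x) = (indicator E :: 'a \<Rightarrow> ennreal)"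
    by (auto simp: indicator_def fun_eq_iff)
  then show ?thesis by (simp add: restrict_norm_def)
qed

definition zero_extension :: "real \<Rightarrow> (real \<Rightarrow> ennreal) \<Rightarrow> real \<Rightarrow> ennreal" where
  "zero_extension c g t = indicator {0..c} t * g t"

lemma borel_measurable_zero_extension:
  assumes "g \<in> borel_measurable (restrict_space lborel {0..c})"
  shows "zero_extension c g \<in> borel_measurable borel"
proof -
  have "(\<lambda>t. if t \<in> {0..c} then g t else 0) \<in> borel_measurable lborel"
    using measurable_restrict_space_iff[of "{0..c}" lborel 0 borel g] assms by simp
  moreover have "(\<lambda>t. if t \<in> {0..c} then g t else 0) = zero_extension c g"
    by (auto simp: zero_extension_def fun_eq_iff indicator_def)
  ultimately show ?thesis by simp
qed

lemma emeasure_superlevel_zero_extension: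
  assumes l: "l \<le> L" and g: "g \<in> borel_measurable (restrict_space lborel {0..l})"
  shows "emeasure (restrict_space lborel {0..L}) {t\<in>space (restrict_space lborel {0..L}). s < zero_extension l g t}
    = emeasure (restrict_space lborel {0..l}) {t\<in>space (restrict_space lborel {0..l}). s < g t}"
proof -
  let ?X = "{t\<in>{0..l}. s < g t}"
  have "?X \<in> sets (restrict_space lborel {0..l})"
    using sets_superlevel[OF g, of s] by simp
  then have X: "?X \<in> sets lborel"
    using sets_restrict_space_iff[of "{0..l}" lborel] by auto
  have "{t\<in>space (restrict_space lborel {0..L}). s < zero_extension l g t} = ?X"
    using l by (auto simp: zero_extension_def indicator_def)
  moreover have "emeasure (restrict_space lborel {0..L}) ?X = emeasure lborel ?X"
    using l X by (intro emeasure_restrict_space) auto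
  moreover have "emeasure (restrict_space lborel {0..l}) ?X = emeasure lborel ?X"
    using X by (intro emeasure_restrict_space) auto
  ultimately show ?thesis by simp
qed

lemma luxemburg_norm_restrict_space:
  assumes fm: "finite_measure M" and na: "nonatomic_measure M" and \<Omega>: "\<Omega> \<in> sets M"
    and pos: "0 < emeasure M \<Omega>" and ri: "ri_function_norm M \<rho>"
    and g: "g \<in> borel_measurable (rep_space (restrict_space M \<Omega>))"
  shows "luxemburg_norm (restrict_space M \<Omega>) (restrict_norm \<Omega> \<rho>) g =
    luxemburg_norm M \<rho> (zero_extension (measure M \<Omega>) g)"
proof -
  interpret finite_measure M by fact
  let ?N = "restrict_space M \<Omega>" and ?l = "measure M \<Omega>" and ?L = "measure M (space M)"
  have l: "0 < ?l" "?l \<le> ?L"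
    using pos \<Omega> sets.sets_into_space[OF \<Omega>] by (auto simp: emeasure_eq_measure intro!: finite_measure_mono)
  have N: "finite_measure ?N" "nonatomic_measure ?N" "0 < measure ?N (space ?N)"
    using finite_measure_restrict_space[OF fm \<Omega>] nonatomic_measure_restrict_space[OF na \<Omega>] l
    by (simp_all add: measure_space_restrict_space[OF \<Omega>])
  have g': "g \<in> borel_measurable (restrict_space lborel {0..?l})"
    using g by (simp add: rep_space_restrict_space[OF \<Omega>])
  have G: "zero_extension ?l g \<in> borel_measurable (rep_space M)"
    by (intro borel_measurable_rep_space borel_measurable_zero_extension g')
  have "\<Omega> \<inter> space ?N = \<Omega>" using sets.sets_into_space[OF \<Omega>] by (auto simp: space_restrict_space)
  then have "luxemburg_norm ?N (restrict_norm \<Omega> \<rho>) g = pullback_norm \<Omega> (dyadic_rank ?N) \<rho> g"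
    using luxemburg_norm_eq_pullback[OF N ri_function_norm_restrict_space[OF \<Omega> ri] g]
    by (simp add: pullback_norm_restrict_norm)
  also have "\<dots> = pullback_norm (space M) (dyadic_rank M) \<rho> (zero_extension ?l g)"
  proof (rule pullback_norm_eq[OF ri _ _ g G])
    show "measure_preserving_on M \<Omega> (dyadic_rank ?N) (rep_space ?N)"
      by (rule measure_preserving_on_restrict_space_subset[OF \<Omega> measure_preserving_dyadic_rank[OF N]])
    show "measure_preserving_on M (space M) (dyadic_rank M) (rep_space M)"
      by (rule measure_preserving_dyadic_rank[OF fm na]) (use l in linarith)
    show "emeasure (rep_space ?N) {t\<in>space (rep_space ?N). s < g t} =
        emeasure (rep_space M) {t\<in>space (rep_space M). s < zero_extension ?l g t}" for s
      unfolding rep_space_restrict_space[OF \<Omega>] rep_space_def[of M]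
      by (rule emeasure_superlevel_zero_extension[OF l(2) g', symmetric])
  qed
  also have "\<dots> = luxemburg_norm M \<rho> (zero_extension ?l g)"
    using luxemburg_norm_eq_pullback[OF fm na _ ri G] l by simp
  finally show ?thesis .
qed

section \<open>Fundamental function and Zippin indices\<close>

lemma equimeasurable_indicator:
  assumes "E \<in> sets M" "F \<in> sets M" "emeasure M E = emeasure M F"
  shows "equimeasurable M (indicator E) (indicator F)"
  unfolding equimeasurable_def
proof
  fix s :: ennreal
  have "{x\<in>space M. s < indicator A x} = (if s < 1 then A else {})" if "A \<in> sets M" for A
    using sets.sets_into_space[OF that] by (auto simp: indicator_def)
  then show "emeasure M {x\<in>space M. s < indicator E x} = emeasure M {x\<in>space M. s < indicator F x}"
    using assms by simp
qed

lemma fundamental_fn_indicator: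
  assumes ri: "ri_function_norm M \<rho>" and E: "E \<in> sets M" "emeasure M E = ennreal t"
  shows "fundamental_fn M \<rho> t = enn2real (\<rho> (indicator E))"
proof -
  have "\<rho> (indicator F) = \<rho> (indicator E)" if "F \<in> sets M" "emeasure M F = ennreal t" for F
    using that E
    by (intro ri_function_normD_equimeasurable[OF ri] equimeasurable_indicator) simp_all
  then have "(\<exists>F\<in>sets M. emeasure M F = ennreal t \<and> enn2real (\<rho> (indicator F)) = v) \<longleftrightarrow>
      v = enn2real (\<rho> (indicator E))" for v
    using E by metis
  then show ?thesis unfolding fundamental_fn_def by simp
qed

lemma fundamental_fn_restrict_space:
  assumes fm: "finite_measure M" and na: "nonatomic_measure M" and \<Omega>: "\<Omega> \<in> sets M"
    and ri: "ri_function_norm M \<rho>" and t: "t \<le> measure M \<Omega>"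
  shows "fundamental_fn (restrict_space M \<Omega>) (restrict_norm \<Omega> \<rho>) t = fundamental_fn M \<rho> t"
proof -
  interpret finite_measure M by fact
  have \<Omega>': "\<Omega> \<inter> space M \<in> sets M" using \<Omega> by auto
  obtain E where E: "E \<in> sets M" "E \<subseteq> \<Omega>" "measure M E = max 0 t"
    using nonatomic_exists_subset_measure[OF fm na \<Omega>, of "max 0 t"] t by auto
  then have "emeasure M E = ennreal t"
    by (simp add: emeasure_eq_measure ennreal_max_0)
  moreover have "E \<in> sets (restrict_space M \<Omega>)"
    using E sets_restrict_space_iff[OF \<Omega>'] by auto
  ultimately show ?thesis
    using fundamental_fn_indicator[OF ri E(1)] emeasure_restrict_space[OF \<Omega>' E(2)]
      fundamental_fn_indicator[OF ri_function_norm_restrict_space[OF \<Omega> ri], of E t]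
    by (simp add: restrict_norm_indicator[OF E(2)])
qed

lemma zippin_M_restrict_space:
  assumes fm: "finite_measure M" and na: "nonatomic_measure M" and \<Omega>: "\<Omega> \<in> sets M"
    and pos: "0 < emeasure M \<Omega>" and ri: "ri_function_norm M \<rho>"
  shows "zippin_M (restrict_space M \<Omega>) (restrict_norm \<Omega> \<rho>) x = zippin_M M \<rho> x"
  unfolding zippin_M_def
proof (rule Limsup_eq)
  let ?l = "measure M \<Omega>"
  have "0 < ?l" using pos by (simp add: finite_measure.emeasure_eq_measure[OF fm])
  have "\<forall>\<^sub>F t in at_right 0. t \<le> ?l \<and> x * t \<le> ?l"
    unfolding eventually_at_right_field
  proof (intro exI[of _ "?l / (\<bar>x\<bar> + 1)"] conjI allI impI)
    show "0 < ?l / (\<bar>x\<bar> + 1)" using \<open>0 < ?l\<close> by simp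
    fix t assume t: "0 < t" "t < ?l / (\<bar>x\<bar> + 1)"
    then have "t * \<bar>x\<bar> + t < ?l" by (simp add: field_simps)
    moreover have "x * t \<le> t * \<bar>x\<bar>" "0 \<le> t * \<bar>x\<bar>"
      using t by (simp_all add: mult.commute mult_left_mono)
    ultimately show "t \<le> ?l" "x * t \<le> ?l" using t by linarith+
  qed
  then show "\<forall>\<^sub>F t in at_right 0.
      ereal (fundamental_fn (restrict_space M \<Omega>) (restrict_norm \<Omega> \<rho>) (x * t) /
        fundamental_fn (restrict_space M \<Omega>) (restrict_norm \<Omega> \<rho>) t) =
      ereal (fundamental_fn M \<rho> (x * t) / fundamental_fn M \<rho> t)"
    by eventually_elim (simp add: fundamental_fn_restrict_space[OF fm na \<Omega> ri])
qed

lemma zippin_restrict_space: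
  assumes "finite_measure M" "nonatomic_measure M" "\<Omega> \<in> sets M" "0 < emeasure M \<Omega>"
    "ri_function_norm M \<rho>"
  shows "zippin_lower (restrict_space M \<Omega>) (restrict_norm \<Omega> \<rho>) = zippin_lower M \<rho>"
    "zippin_upper (restrict_space M \<Omega>) (restrict_norm \<Omega> \<rho>) = zippin_upper M \<rho>"
  unfolding zippin_lower_def zippin_upper_def zippin_M_restrict_space[OF assms] by simp_all

section \<open>Boyd indices\<close>

lemma zero_extension_le: "zero_extension c h t \<le> h t"
  by (simp add: zero_extension_def indicator_def)

lemma zero_extension_neg: "u < 0 \<Longrightarrow> zero_extension c h u = 0"
  by (simp add: zero_extension_def)

lemma zero_extension_zero_extension: "c \<le> d \<Longrightarrow> zero_extension d (zero_extension c h) = zero_extension c h"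
  by (auto simp: zero_extension_def indicator_def fun_eq_iff)

lemma borel_measurable_zero_extension_borel:
  "h \<in> borel_measurable borel \<Longrightarrow> zero_extension c h \<in> borel_measurable borel"
  unfolding zero_extension_def by measurable

lemma dilation_eq_zero_extension: "dilation c s g = (\<lambda>t. zero_extension c g (s * t))"
  by (auto simp: dilation_def zero_extension_def fun_eq_iff indicator_def)

lemma borel_measurable_dilation:
  assumes "g \<in> borel_measurable (restrict_space lborel {0..c})"
  shows "dilation c s g \<in> borel_measurable borel"
proof -
  have [measurable]: "zero_extension c g \<in> borel_measurable borel"
    by (rule borel_measurable_zero_extension[OF assms])
  show ?thesis unfolding dilation_eq_zero_extension by measurable
qed

lemma borel_measurable_restrict_lborel:
  "h \<in> borel_measurable borel \<Longrightarrow> h \<in> borel_measurable (restrict_space lborel S)"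
  by (rule measurable_restrict_space1) simp

lemma emeasure_lborel_translate:
  assumes "B \<in> sets borel"
  shows "emeasure lborel {t::real. t + c \<in> B} = emeasure lborel B"
proof -
  have "emeasure lborel B = emeasure (distr lborel borel ((+) c)) B"
    by (simp add: lborel_distr_plus)
  also have "\<dots> = emeasure lborel ((+) c -` B)"
    using assms by (subst emeasure_distr) auto
  also have "(+) c -` B = {t. t + c \<in> B}" by (auto simp: add.commute)
  finally show ?thesis ..
qed

text \<open>Cover \<open>[0, L]\<close> by \<open>\<lfloor>L/l\<rfloor> + 1\<close> intervals of length \<open>c\<close>, chosen so that \<open>c/x \<le> l\<close>: on the
  \<open>k\<close>-th one, \<open>E\<^bsub>1/x\<^esub> G\<close> is the translate by \<open>k c\<close> of the dilation on \<open>[0, l]\<close> of \<open>G\<close>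
  shifted left by \<open>k c / x\<close>.\<close>

lemma dilation_le_sum_translates:
  fixes G :: "real \<Rightarrow> ennreal" and c :: real
  assumes l: "0 < l" and x: "0 < x" and t: "0 \<le> t" "t \<le> L"
  defines "c \<equiv> l * min 1 x"
  shows "dilation L (1 / x) G t \<le>
    (\<Sum>k < nat \<lfloor>L / l\<rfloor> + 1. zero_extension l (dilation l (1 / x) (\<lambda>v. G (v + k * c / x))) (t - k * c))"
    (is "_ \<le> (\<Sum>k < ?N. ?piece k)")
proof (cases "t / x \<le> L")
  case True
  have c: "0 < c" "c \<le> l" using l x by (simp_all add: c_def mult_left_le)
  have "c / x = l * min (1 / x) 1" using x by (auto simp: c_def min_def field_simps)
  then have cx: "c / x \<le> l" using l by (simp add: mult_left_le)
  define k where "k = nat \<lfloor>t / c\<rfloor>"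
  have "0 \<le> t / c" using t c by simp
  then have k: "real k \<le> t / c" "t / c < real k + 1" unfolding k_def by linarith+
  have "t / c \<le> L / l"
  proof (cases "1 \<le> x")
    case True
    then show ?thesis using t l by (simp add: c_def divide_right_mono)
  next
    case False
    then have "c = l * x" by (simp add: c_def)
    then show ?thesis using \<open>t / x \<le> L\<close> x l by (simp add: field_simps)
  qed
  then have "real k < real ?N" using k by linarith
  then have kN: "k < ?N" by (simp only: of_nat_less_iff)
  define u where "u = t - k * c"
  have u: "0 \<le> u" "u < c" using k c by (simp_all add: u_def field_simps)
  have "u / x \<le> c / x" using u x by (simp add: divide_right_mono)
  then have ux: "0 \<le> u / x" "u / x \<le> l" using cx u x by simp_all
  have "?piece k = dilation l (1 / x) (\<lambda>v. G (v + k * c / x)) u"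
    using u c by (simp add: zero_extension_def u_def)
  also have "\<dots> = G (u / x + k * c / x)"
    using ux by (simp add: dilation_def)
  also have "u / x + k * c / x = t / x"
    by (simp add: u_def diff_divide_distrib)
  also have "G (t / x) = dilation L (1 / x) G t"
    using True t x by (simp add: dilation_def)
  finally have "dilation L (1 / x) G t = ?piece k" ..
  also have "\<dots> \<le> (\<Sum>k < ?N. ?piece k)" using kN by (intro member_le_sum) auto
  finally show ?thesis .
next
  case False
  then show ?thesis by (simp add: dilation_def)
qed

locale ri_norm_on_interval =
  fixes L l :: real and \<rho> :: "(real \<Rightarrow> ennreal) \<Rightarrow> ennreal"
  assumes l_pos: "0 < l" and l_le_L: "l \<le> L"
    and ri_interval: "ri_function_norm (restrict_space lborel {0..L}) \<rho>"
begin

lemma function_norm_interval: "function_norm (restrict_space lborel {0..L}) \<rho>"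
  by (rule ri_function_normD_function_norm[OF ri_interval])

lemma norm_mono':
  fixes f g :: "real \<Rightarrow> ennreal"
  assumes "f \<in> borel_measurable (restrict_space lborel {0..L})"
    and "g \<in> borel_measurable (restrict_space lborel {0..L})"
    and "\<And>t. 0 \<le> t \<Longrightarrow> t \<le> L \<Longrightarrow> g t \<le> f t"
  shows "\<rho> g \<le> \<rho> f"
  using assms by (intro function_normD_mono[OF function_norm_interval] AE_I2) auto

lemma norm_mono:
  fixes f g :: "real \<Rightarrow> ennreal"
  assumes "f \<in> borel_measurable borel" "g \<in> borel_measurable borel"
    and "\<And>t. 0 \<le> t \<Longrightarrow> t \<le> L \<Longrightarrow> g t \<le> f t"
  shows "\<rho> g \<le> \<rho> f"
  using assms by (intro norm_mono' borel_measurable_restrict_lborel)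

lemma norm_sum_le:
  fixes f :: "nat \<Rightarrow> real \<Rightarrow> ennreal"
  assumes f: "\<And>k. f k \<in> borel_measurable borel"
  shows "\<rho> (\<lambda>t. \<Sum>k<n. f k t) \<le> (\<Sum>k<n. \<rho> (f k))"
proof (induction n)
  case 0
  have "\<rho> (\<lambda>t. ennreal 0 * 0) = ennreal 0 * \<rho> (\<lambda>t. 0)"
    by (rule function_normD_homogeneous[OF function_norm_interval]) auto
  then show ?case by simp
next
  case (Suc n)
  have "(\<lambda>t. \<Sum>k<n. f k t) \<in> borel_measurable (restrict_space lborel {0..L})"
    using f by (intro borel_measurable_restrict_lborel) measurable
  then have "\<rho> (\<lambda>t. \<Sum>k<Suc n. f k t) \<le> \<rho> (\<lambda>t. \<Sum>k<n. f k t) + \<rho> (f n)"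
    using function_normD_triangle[OF function_norm_interval _ borel_measurable_restrict_lborel[OF f]] by simp
  then show ?case using Suc by (simp add: add_right_mono order_trans)
qed

lemma norm_eq_of_emeasure_lborel:
  fixes f g :: "real \<Rightarrow> ennreal"
  assumes f: "f \<in> borel_measurable borel" and g: "g \<in> borel_measurable borel"
    and eq: "\<And>s. emeasure lborel {t\<in>{0..L}. s < f t} = emeasure lborel {t\<in>{0..L}. s < g t}"
  shows "\<rho> f = \<rho> g"
proof (rule ri_function_normD_equimeasurable[OF ri_interval])
  show f': "f \<in> borel_measurable (restrict_space lborel {0..L})"
    and g': "g \<in> borel_measurable (restrict_space lborel {0..L})"
    using f g by (simp_all add: borel_measurable_restrict_lborel)
  have restrict: "emeasure (restrict_space lborel {0..L}) {t\<in>space (restrict_space lborel {0..L}). s < h t} =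
      emeasure lborel {t\<in>{0..L}. s < h t}" if "h \<in> borel_measurable borel" for h :: "real \<Rightarrow> ennreal" and s
    using sets_superlevel[OF that, of s] by (subst emeasure_restrict_space) auto
  show "equimeasurable (restrict_space lborel {0..L}) f g"
    unfolding equimeasurable_def restrict[OF f] restrict[OF g] eq by simp
qed

lemma norm_translate_right_le:
  fixes f :: "real \<Rightarrow> ennreal"
  assumes f[measurable]: "f \<in> borel_measurable borel"
    and neg: "\<And>u. u < 0 \<Longrightarrow> f u = 0" and a: "0 \<le> a"
  shows "\<rho> (\<lambda>t. f (t - a)) \<le> \<rho> f"
proof -
  let ?G = "\<lambda>t. indicator {..L - a} t * f t"
  have "\<rho> (\<lambda>t. f (t - a)) = \<rho> ?G"
  proof (rule norm_eq_of_emeasure_lborel)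
    fix s
    let ?U = "{u\<in>{0..L - a}. s < f u}"
    have pos: "0 \<le> u" if "s < f u" for u
      using neg[of u] that by (cases "u < 0") auto
    have "t \<in> {t\<in>{0..L}. s < f (t - a)} \<longleftrightarrow> t \<in> {t. t + - a \<in> ?U}" for t
      using a pos[of "t - a"] by auto
    then have "{t\<in>{0..L}. s < f (t - a)} = {t. t + - a \<in> ?U}" by blast
    moreover have "{t\<in>{0..L}. s < ?G t} = ?U"
      using a pos by (auto simp: indicator_def)
    moreover have "?U \<in> sets borel" by measurable
    ultimately show "emeasure lborel {t\<in>{0..L}. s < f (t - a)} = emeasure lborel {t\<in>{0..L}. s < ?G t}"
      by (simp only: emeasure_lborel_translate)
  qed measurable
  also have "\<dots> \<le> \<rho> f" by (rule norm_mono) (auto simp: indicator_def)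
  finally show ?thesis .
qed

lemma norm_translate_left_le:
  fixes g :: "real \<Rightarrow> ennreal"
  assumes g[measurable]: "g \<in> borel_measurable borel" and a: "0 \<le> a"
  shows "\<rho> (\<lambda>v. indicator {..L - a} v * g (v + a)) \<le> \<rho> g"
proof -
  let ?G = "\<lambda>t. indicator {a..} t * g t"
  have "\<rho> (\<lambda>v. indicator {..L - a} v * g (v + a)) = \<rho> ?G"
  proof (rule norm_eq_of_emeasure_lborel)
    fix s
    let ?W = "{w\<in>{a..L}. s < g w}"
    have "{t\<in>{0..L}. s < indicator {..L - a} t * g (t + a)} = {t. t + a \<in> ?W}"
      using a by (auto simp: indicator_def)
    moreover have "{t\<in>{0..L}. s < ?G t} = ?W"
      using a by (auto simp: indicator_def)
    moreover have "?W \<in> sets borel" by measurable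
    ultimately show "emeasure lborel {t\<in>{0..L}. s < indicator {..L - a} t * g (t + a)} =
        emeasure lborel {t\<in>{0..L}. s < ?G t}"
      by (simp only: emeasure_lborel_translate)
  qed measurable
  also have "\<dots> \<le> \<rho> g" by (rule norm_mono) (auto simp: indicator_def)
  finally show ?thesis .
qed

definition dilation_bound :: "real \<Rightarrow> ennreal" where
  "dilation_bound x =
    (SUP g\<in>{g \<in> borel_measurable (restrict_space lborel {0..L}). \<rho> g \<le> 1}. \<rho> (dilation L (1/x) g))"

definition dilation_bound_sub :: "real \<Rightarrow> ennreal" where
  "dilation_bound_sub x =
    (SUP g\<in>{g \<in> borel_measurable (restrict_space lborel {0..l}). \<rho> (zero_extension l g) \<le> 1}.
      \<rho> (zero_extension l (dilation l (1/x) g)))"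

lemma dilation_bound_sub_le: "dilation_bound_sub x \<le> dilation_bound x"
  unfolding dilation_bound_sub_def
proof (rule SUP_least)
  fix g assume "g \<in> {g \<in> borel_measurable (restrict_space lborel {0..l}). \<rho> (zero_extension l g) \<le> 1}"
  then have g: "g \<in> borel_measurable (restrict_space lborel {0..l})" and g1: "\<rho> (zero_extension l g) \<le> 1"
    by auto
  let ?G = "zero_extension l g"
  have G: "?G \<in> borel_measurable borel" by (rule borel_measurable_zero_extension[OF g])
  have "\<rho> (zero_extension l (dilation l (1/x) g)) \<le> \<rho> (dilation L (1/x) ?G)"
  proof (rule norm_mono)
    show "zero_extension l (dilation l (1/x) g) \<in> borel_measurable borel"
      by (intro borel_measurable_zero_extension_borel borel_measurable_dilation g)
    show "dilation L (1/x) ?G \<in> borel_measurable borel"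
      by (intro borel_measurable_dilation borel_measurable_restrict_lborel G)
    fix t
    have "zero_extension l (dilation l (1/x) g) t \<le> dilation l (1/x) g t" by (rule zero_extension_le)
    also have "\<dots> = dilation L (1/x) ?G t"
      unfolding dilation_eq_zero_extension zero_extension_zero_extension[OF l_le_L] ..
    finally show "zero_extension l (dilation l (1/x) g) t \<le> dilation L (1/x) ?G t" .
  qed
  also have "\<dots> \<le> dilation_bound x"
    unfolding dilation_bound_def using G g1
    by (intro SUP_upper) (auto intro: borel_measurable_restrict_lborel)
  finally show "\<rho> (zero_extension l (dilation l (1/x) g)) \<le> dilation_bound x" .
qed

lemma norm_zero_extension_translate_le:
  fixes G :: "real \<Rightarrow> ennreal"
  assumes G[measurable]: "G \<in> borel_measurable borel"
    and vanish: "\<And>v. L < v \<Longrightarrow> G v = 0" and a: "0 \<le> a"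
  shows "\<rho> (zero_extension l (\<lambda>v. G (v + a))) \<le> \<rho> G"
proof -
  have "\<rho> (zero_extension l (\<lambda>v. G (v + a))) \<le> \<rho> (\<lambda>v. indicator {..L - a} v * G (v + a))"
  proof (rule norm_mono)
    show "(\<lambda>v. indicator {..L - a} v * G (v + a)) \<in> borel_measurable borel" by measurable
    show "zero_extension l (\<lambda>v. G (v + a)) \<in> borel_measurable borel"
      by (intro borel_measurable_zero_extension_borel) measurable
    fix t
    show "zero_extension l (\<lambda>v. G (v + a)) t \<le> indicator {..L - a} t * G (t + a)"
    proof (cases "t \<le> L - a")
      case True
      then show ?thesis using zero_extension_le[of l "\<lambda>v. G (v + a)" t] by simp
    next
      case False
      then show ?thesis using vanish[of "t + a"] by (simp add: zero_extension_def)
    qed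
  qed
  also have "\<dots> \<le> \<rho> G" by (rule norm_translate_left_le[OF G a])
  finally show ?thesis .
qed

lemma norm_le_dilation_bound_sub:
  fixes G :: "real \<Rightarrow> ennreal"
  assumes G[measurable]: "G \<in> borel_measurable borel"
    and vanish: "\<And>v. L < v \<Longrightarrow> G v = 0" and G1: "\<rho> G \<le> 1" and a: "0 \<le> a"
  shows "\<rho> (zero_extension l (dilation l (1 / x) (\<lambda>v. G (v + a)))) \<le> dilation_bound_sub x"
proof -
  have "(\<lambda>v. G (v + a)) \<in> borel_measurable borel" by measurable
  moreover have "\<rho> (zero_extension l (\<lambda>v. G (v + a))) \<le> 1"
    using norm_zero_extension_translate_le[OF G vanish a] G1 by simp
  ultimately show ?thesis
    unfolding dilation_bound_sub_def by (intro SUP_upper) (auto intro: borel_measurable_restrict_lborel)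
qed

lemma dilation_bound_le:
  assumes x: "0 < x"
  shows "dilation_bound x \<le> of_nat (nat \<lfloor>L / l\<rfloor> + 1) * dilation_bound_sub x"
  unfolding dilation_bound_def
proof (rule SUP_least)
  let ?N = "nat \<lfloor>L / l\<rfloor> + 1" and ?c = "l * min 1 x"
  fix g assume "g \<in> {g \<in> borel_measurable (restrict_space lborel {0..L}). \<rho> g \<le> 1}"
  then have g: "g \<in> borel_measurable (restrict_space lborel {0..L})" and g1: "\<rho> g \<le> 1" by auto
  let ?G = "zero_extension L g"
  have G[measurable]: "?G \<in> borel_measurable borel" by (rule borel_measurable_zero_extension[OF g])
  have "\<rho> ?G \<le> \<rho> g"
    by (intro norm_mono' g borel_measurable_restrict_lborel G zero_extension_le)
  then have G1: "\<rho> ?G \<le> 1" using g1 by simp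
  define piece where "piece k = zero_extension l (dilation l (1 / x) (\<lambda>v. ?G (v + k * ?c / x)))"
    for k :: nat
  have piece[measurable]: "piece k \<in> borel_measurable borel" for k
    unfolding piece_def
    by (intro borel_measurable_zero_extension_borel borel_measurable_dilation
        borel_measurable_restrict_lborel) measurable
  have "\<rho> (dilation L (1/x) g) = \<rho> (dilation L (1/x) ?G)"
    unfolding dilation_eq_zero_extension zero_extension_zero_extension[OF order.refl] ..
  also have "\<dots> \<le> \<rho> (\<lambda>t. \<Sum>k<?N. piece k (t - k * ?c))"
  proof (rule norm_mono)
    show "dilation L (1/x) ?G \<in> borel_measurable borel"
      by (intro borel_measurable_dilation borel_measurable_restrict_lborel G)
    show "dilation L (1/x) ?G t \<le> (\<Sum>k<?N. piece k (t - k * ?c))" if "0 \<le> t" "t \<le> L" for t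
      unfolding piece_def by (rule dilation_le_sum_translates[OF l_pos x that])
  qed measurable
  also have "\<dots> \<le> (\<Sum>k<?N. \<rho> (\<lambda>t. piece k (t - k * ?c)))"
    by (rule norm_sum_le) measurable
  also have "\<dots> \<le> (\<Sum>k<?N. \<rho> (piece k))"
    using l_pos x by (intro sum_mono norm_translate_right_le piece) (simp_all add: piece_def zero_extension_neg)
  also have "\<dots> \<le> (\<Sum>k<?N. dilation_bound_sub x)"
    unfolding piece_def using l_pos x
    by (intro sum_mono norm_le_dilation_bound_sub G G1) (simp_all add: zero_extension_def)
  finally show "\<rho> (dilation L (1/x) g) \<le> of_nat ?N * dilation_bound_sub x" by simp
qed

end

lemma abs_ln_enn2real_diff_le:
  fixes a b :: ennreal and N :: nat
  assumes ab: "a \<le> b" and ba: "b \<le> of_nat N * a" and N: "1 \<le> N"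
  shows "\<bar>ln (enn2real b) - ln (enn2real a)\<bar> \<le> ln (real N)"
proof -
  have lnN: "0 \<le> ln (real N)" using N by simp
  consider "a = 0" | "a = \<infinity>" | r where "a = ennreal r" "0 < r"
  proof (cases a)
    case (real r)
    then show ?thesis using that by (cases "r = 0") auto
  qed (use that in simp)
  then show ?thesis
  proof cases
    case 1
    then show ?thesis using ba lnN by simp
  next
    case 2 \<comment> \<open>then \<open>b = \<infinity>\<close> as well, and both sides vanish since \<open>enn2real \<infinity> = 0\<close>\<close>
    then show ?thesis using ab lnN by (simp add: top_unique)
  next
    case (3 r)
    then have "b \<le> ennreal (real N * r)"
      using ba by (simp add: ennreal_mult ennreal_of_nat_eq_real_of_nat)
    then obtain r' where b: "b = ennreal r'" "r' \<le> real N * r"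
      using 3 N by (cases b) (auto simp: top_unique)
    have "r \<le> r'" using ab 3 b by (simp add: ennreal_le_iff2)
    then have "ln r \<le> ln r'" "ln r' \<le> ln (real N * r)" using 3 b by simp_all
    moreover have "ln (real N * r) = ln (real N) + ln r" using 3 N by (simp add: ln_mult)
    ultimately show ?thesis using 3 b \<open>r \<le> r'\<close> by simp
  qed
qed

lemma Lim_eq_of_abs_diff_le:
  fixes f g b :: "'a \<Rightarrow> real"
  assumes "(b \<longlongrightarrow> 0) F" and "\<forall>\<^sub>F x in F. \<bar>f x - g x\<bar> \<le> b x"
  shows "Lim F f = Lim F g"
proof -
  have "((\<lambda>x. f x - g x) \<longlongrightarrow> 0) F"
    by (rule Lim_null_comparison[OF _ assms(1)]) (use assms(2) in simp)
  then have "(f \<longlongrightarrow> a) F \<longleftrightarrow> (g \<longlongrightarrow> a) F" for a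
    using Lim_transform Lim_transform2 by blast
  then show ?thesis by (simp add: t2_space_class.Lim_def)
qed

lemma boyd_h_restrict_space:
  assumes fm: "finite_measure M" and na: "nonatomic_measure M" and \<Omega>: "\<Omega> \<in> sets M"
    and pos: "0 < emeasure M \<Omega>" and ri: "ri_function_norm M \<rho>" and x: "0 < x"
  shows "boyd_h (restrict_space M \<Omega>) (restrict_norm \<Omega> \<rho>) x \<le> boyd_h M \<rho> x"
    and "boyd_h M \<rho> x \<le>
      of_nat (nat \<lfloor>measure M (space M) / measure M \<Omega>\<rfloor> + 1) * boyd_h (restrict_space M \<Omega>) (restrict_norm \<Omega> \<rho>) x"
proof -
  interpret finite_measure M by fact
  let ?N = "restrict_space M \<Omega>" and ?l = "measure M \<Omega>" and ?L = "measure M (space M)"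
  have l: "0 < ?l" "?l \<le> ?L"
    using pos \<Omega> sets.sets_into_space[OF \<Omega>] by (auto simp: emeasure_eq_measure intro!: finite_measure_mono)
  have rep: "is_luxemburg_rep M \<rho> (luxemburg_norm M \<rho>)"
    using is_luxemburg_rep_luxemburg_norm[OF fm na _ ri] l by simp
  interpret ri_norm_on_interval ?L ?l "luxemburg_norm M \<rho>"
    using l rep by unfold_locales (simp_all add: is_luxemburg_rep_def rep_space_def)
  have "boyd_h M \<rho> x = dilation_bound x"
    unfolding boyd_h_def dilation_bound_def rep_space_def ..
  moreover have "boyd_h ?N (restrict_norm \<Omega> \<rho>) x = dilation_bound_sub x"
  proof -
    have lux: "luxemburg_norm ?N (restrict_norm \<Omega> \<rho>) g = luxemburg_norm M \<rho> (zero_extension ?l g)"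
      if "g \<in> borel_measurable (restrict_space lborel {0..?l})" for g
      using luxemburg_norm_restrict_space[OF fm na \<Omega> pos ri] that
      by (simp add: rep_space_restrict_space[OF \<Omega>])
    show ?thesis
      unfolding boyd_h_def dilation_bound_sub_def rep_space_restrict_space[OF \<Omega>]
        measure_space_restrict_space[OF \<Omega>]
      using lux by (intro SUP_cong) (auto intro: borel_measurable_restrict_lborel borel_measurable_dilation)
  qed
  ultimately show "boyd_h ?N (restrict_norm \<Omega> \<rho>) x \<le> boyd_h M \<rho> x"
    and "boyd_h M \<rho> x \<le> of_nat (nat \<lfloor>?L / ?l\<rfloor> + 1) * boyd_h ?N (restrict_norm \<Omega> \<rho>) x"
    using dilation_bound_sub_le dilation_bound_le[OF x] by simp_all
qed

lemma boyd_restrict_space: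
  assumes fm: "finite_measure M" and na: "nonatomic_measure M" and \<Omega>: "\<Omega> \<in> sets M"
    and pos: "0 < emeasure M \<Omega>" and ri: "ri_function_norm M \<rho>"
  shows "boyd_lower (restrict_space M \<Omega>) (restrict_norm \<Omega> \<rho>) = boyd_lower M \<rho>"
    and "boyd_upper (restrict_space M \<Omega>) (restrict_norm \<Omega> \<rho>) = boyd_upper M \<rho>"
proof -
  let ?h = "boyd_h M \<rho>" and ?h\<Omega> = "boyd_h (restrict_space M \<Omega>) (restrict_norm \<Omega> \<rho>)"
  define K where "K = nat \<lfloor>measure M (space M) / measure M \<Omega>\<rfloor> + 1"
  have bound: "\<bar>ln (enn2real (?h\<Omega> x)) / ln x - ln (enn2real (?h x)) / ln x\<bar> \<le> ln (real K) / \<bar>ln x\<bar>"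
    if "0 < x" for x
  proof -
    have "\<bar>ln (enn2real (?h x)) - ln (enn2real (?h\<Omega> x))\<bar> \<le> ln (real K)"
      using boyd_h_restrict_space[OF assms that] unfolding K_def
      by (intro abs_ln_enn2real_diff_le) simp_all
    then show ?thesis
      by (simp add: diff_divide_distrib[symmetric] abs_divide abs_minus_commute divide_right_mono)
  qed
  have "((\<lambda>x::real. ln (real K) / \<bar>ln x\<bar>) \<longlongrightarrow> 0) (at_right 0)" by real_asymp
  moreover have "\<forall>\<^sub>F x in at_right 0.
      \<bar>ln (enn2real (?h\<Omega> x)) / ln x - ln (enn2real (?h x)) / ln x\<bar> \<le> ln (real K) / \<bar>ln x\<bar>"
    using eventually_at_right_less by eventually_elim (rule bound)
  ultimately show "boyd_lower (restrict_space M \<Omega>) (restrict_norm \<Omega> \<rho>) = boyd_lower M \<rho>"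
    unfolding boyd_lower_def by (rule Lim_eq_of_abs_diff_le)
  have "((\<lambda>x::real. ln (real K) / \<bar>ln x\<bar>) \<longlongrightarrow> 0) at_top" by real_asymp
  moreover have "\<forall>\<^sub>F x in at_top.
      \<bar>ln (enn2real (?h\<Omega> x)) / ln x - ln (enn2real (?h x)) / ln x\<bar> \<le> ln (real K) / \<bar>ln x\<bar>"
    using eventually_gt_at_top[of "0::real"] by eventually_elim (rule bound)
  ultimately show "boyd_upper (restrict_space M \<Omega>) (restrict_norm \<Omega> \<rho>) = boyd_upper M \<rho>"
    unfolding boyd_upper_def by (rule Lim_eq_of_abs_diff_le)
qed

theorem lemma2p3:
  fixes M :: "'a measure" and \<Omega> :: "'a set" and \<rho> :: "('a \<Rightarrow> ennreal) \<Rightarrow> ennreal"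
  assumes "finite_measure M"
    and "nonatomic_measure M"
    and "separable_measure M"
    and "\<Omega> \<in> sets M"
    and "emeasure M \<Omega> > 0"
    and "ri_function_norm M \<rho>"
  shows "ri_function_norm (restrict_space M \<Omega>) (restrict_norm \<Omega> \<rho>) \<and>
         boyd_lower M \<rho> = boyd_lower (restrict_space M \<Omega>) (restrict_norm \<Omega> \<rho>) \<and>
         boyd_upper M \<rho> = boyd_upper (restrict_space M \<Omega>) (restrict_norm \<Omega> \<rho>) \<and>
         zippin_lower M \<rho> = zippin_lower (restrict_space M \<Omega>) (restrict_norm \<Omega> \<rho>) \<and>
         zippin_upper M \<rho> = zippin_upper (restrict_space M \<Omega>) (restrict_norm \<Omega> \<rho>)"
  using ri_function_norm_restrict_space[OF assms(4,6)]
    boyd_restrict_space[OF assms(1,2,4,5,6)] zippin_restrict_space[OF assms(1,2,4,5,6)]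
  by simp

end
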